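(* Consider $G\ge 2$ treatment levels with potential outcomes $Y(1),\dots,Y(G)$, assignment indicators $\mathbf{W}=(W_1,\dots,W_G)$ (each $W_g\in\{0,1\}$, $W_1+\cdots+W_G=1$) with $\rho_g=\mathbb{P}(W_g=1)>0$ for all $g$, and a $1\times K$ covariate vector $\mathbf{X}$. Assume $\mathbf{W}$ is independent of $(Y(1),\dots,Y(G),\mathbf{X})$, the data $\{(\mathbf{W}_i,Y_i(1),\dots,Y_i(G),\mathbf{X}_i)\}_{i=1}^N$ are i.i.d. for a nonrandom $N$, and second moments are finite. Observed outcome $Y_i=\sum_g W_{ig}Y_i(g)$. For each $g$, let $(\hat\alpha_g,\hat{\boldsymbol\beta}_g)$ be the OLS intercept and slopes from regressing $Y_i$ on $1,\mathbf{X}_i$ using only units with $W_{ig}=1$, and let $\hat\mu_g=\hat\alpha_g+\bar{\mathbf{X}}\hat{\boldsymbol\beta}_g$ with $\bar{\mathbf{X}}=N^{-1}\sum_i\mathbf{X}_i$; stack $\hat{\boldsymbol\mu}=(\hat\mu_1,\dots,\hat\mu_G)'$ and $\boldsymbol\mu=(\mu_1,\dots,\mu_G)'$. Then $$\sqrt N(\hat{\boldsymbol\mu}-\boldsymbol\mu)=N^{-1/2}\sum_{i=1}^N(\mathbf{K}_i+\mathbf{Q}_i)+o_p(1),$$ where $\mathbf{K}_i$ is the $G\times1$ vector with $g$-th entry $\dot{\mathbf{X}}_i\boldsymbol\beta_g$ and $\mathbf{Q}_i$ is the $G\times1$ vector with $g$-th entry $W_{ig}U_i(g)/\rho_g$.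
   Context: $\mu_g=\mathbb{E}[Y(g)]$, $\boldsymbol\mu_{\mathbf{X}}=\mathbb{E}(\mathbf{X})$, $\dot{\mathbf{X}}=\mathbf{X}-\boldsymbol\mu_{\mathbf{X}}$. For each $g$, $\boldsymbol\beta_g$ is the coefficient vector of the population linear projection of $Y(g)-\mu_g$ onto $\dot{\mathbf{X}}$ (equivalently the slope in the linear projection of $Y(g)$ on $1,\mathbf{X}$), and $U(g)=Y(g)-\mu_g-\dot{\mathbf{X}}\boldsymbol\beta_g$, so $\mathbb{E}[U(g)]=0$, $\mathbb{E}[\dot{\mathbf{X}}'U(g)]=\mathbf{0}$. Subscript $i$ denotes the quantity for the $i$-th draw. *)

theory Defs
  imports "HOL-Probability.Probability"
begin

(* Index conventions: treatment levels g \<in> {1..G}; covariate components j \<in> {..<K};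
   sample units i \<in> {..<N} (unit i = 0 is used as the representative population draw). *)

definition unit_space :: "nat \<Rightarrow> nat \<Rightarrow> ((nat \<Rightarrow> real) \<times> (nat \<Rightarrow> real) \<times> (nat \<Rightarrow> real)) measure" where
  "unit_space G K =
     PiM {1..G} (\<lambda>_. borel) \<Otimes>\<^sub>M (PiM {1..G} (\<lambda>_. borel) \<Otimes>\<^sub>M PiM {..<K} (\<lambda>_. borel))"

definition unit_data ::
  "nat \<Rightarrow> nat \<Rightarrow> (nat \<Rightarrow> 'a \<Rightarrow> nat \<Rightarrow> real) \<Rightarrow> (nat \<Rightarrow> 'a \<Rightarrow> nat \<Rightarrow> real)
     \<Rightarrow> (nat \<Rightarrow> 'a \<Rightarrow> nat \<Rightarrow> real) \<Rightarrow> nat \<Rightarrow> 'a \<Rightarrow> (nat \<Rightarrow> real) \<times> (nat \<Rightarrow> real) \<times> (nat \<Rightarrow> real)" where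
  "unit_data G K W Y X i = (\<lambda>\<omega>. (restrict (W i \<omega>) {1..G}, restrict (Y i \<omega>) {1..G}, restrict (X i \<omega>) {..<K}))"

definition Yobs :: "nat \<Rightarrow> (nat \<Rightarrow> 'a \<Rightarrow> nat \<Rightarrow> real) \<Rightarrow> (nat \<Rightarrow> 'a \<Rightarrow> nat \<Rightarrow> real) \<Rightarrow> nat \<Rightarrow> 'a \<Rightarrow> real" where
  "Yobs G W Y i \<omega> = (\<Sum>g\<in>{1..G}. W i \<omega> g * Y i \<omega> g)"

definition is_ols_sub ::
  "nat \<Rightarrow> nat \<Rightarrow> (nat \<Rightarrow> 'a \<Rightarrow> nat \<Rightarrow> real) \<Rightarrow> (nat \<Rightarrow> 'a \<Rightarrow> nat \<Rightarrow> real)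
     \<Rightarrow> (nat \<Rightarrow> 'a \<Rightarrow> nat \<Rightarrow> real) \<Rightarrow> nat \<Rightarrow> nat \<Rightarrow> 'a \<Rightarrow> real \<Rightarrow> (nat \<Rightarrow> real) \<Rightarrow> bool" where
  "is_ols_sub G K W Y X N g \<omega> a b \<longleftrightarrow>
     (\<forall>a' b'. (\<Sum>i\<in>{i. i < N \<and> W i \<omega> g = 1}. (Yobs G W Y i \<omega> - a - (\<Sum>j<K. X i \<omega> j * b j))\<^sup>2)
             \<le> (\<Sum>i\<in>{i. i < N \<and> W i \<omega> g = 1}. (Yobs G W Y i \<omega> - a' - (\<Sum>j<K. X i \<omega> j * b' j))\<^sup>2))"

definition is_lin_proj :: "'a measure \<Rightarrow> nat \<Rightarrow> ('a \<Rightarrow> nat \<Rightarrow> real) \<Rightarrow> ('a \<Rightarrow> real) \<Rightarrow> (nat \<Rightarrow> real) \<Rightarrow> bool" where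
  "is_lin_proj M K V Z b \<longleftrightarrow>
     (\<forall>b'. (\<integral>\<omega>. (Z \<omega> - (\<Sum>j<K. V \<omega> j * b j))\<^sup>2 \<partial>M) \<le> (\<integral>\<omega>. (Z \<omega> - (\<Sum>j<K. V \<omega> j * b' j))\<^sup>2 \<partial>M))"

(* Z_N = o_p(1): for all eps, delta > 0, eventually {|Z_N| > eps} is covered by an event of probability < delta
   (outer-probability form; coincides with convergence in probability to 0 for measurable Z_N). *)
definition o_p1 :: "'a measure \<Rightarrow> (nat \<Rightarrow> 'a \<Rightarrow> real) \<Rightarrow> bool" where
  "o_p1 M Z \<longleftrightarrow> (\<forall>\<epsilon>>0. \<forall>\<delta>>0. \<exists>N0. \<forall>N\<ge>N0. \<exists>A\<in>sets M.
       {\<omega>\<in>space M. \<epsilon> < \<bar>Z N \<omega>\<bar>} \<subseteq> A \<and> measure M A < \<delta>)"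

end

theory Submission
  imports Defs
begin

text \<open>
  Fix an arm \<open>g\<close> and use as regressors the constant together with an \<open>L\<^sup>2\<close>-orthonormal basis of
  the centred covariates (Gram-Schmidt, so a singular covariance matrix is allowed). In this basis
  the difference \<open>\<phi>\<close> between the OLS coefficients of arm \<open>g\<close> and the population projection solves
  the normal equations \<open>M \<phi> = c\<close> with \<open>M = N\<^sup>-\<^sup>1 \<Sum> W\<^sub>g Z Z'\<close> and \<open>c = N\<^sup>-\<^sup>1 \<Sum> W\<^sub>g U(g) Z\<close>.
  Since the assignment is independent of \<open>(Y, X)\<close>, the weak law of large numbers gives
  \<open>M \<rightarrow> \<rho>\<^sub>g I\<close> and \<open>c \<rightarrow> 0\<close> in probability, which forces \<open>\<phi>\<close> to be of the order of these
  deviations. Eliminating the intercept through the first normal equation then writes the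
  remainder of the expansion as a sum of products of \<open>o\<^sub>p(1)\<close> deviations with \<open>O\<^sub>p(1)\<close>
  normalised sums.
\<close>

section \<open>Square-integrable functions\<close>

definition sq_integrable :: "'a measure \<Rightarrow> ('a \<Rightarrow> real) \<Rightarrow> bool" where
  "sq_integrable M f \<longleftrightarrow> f \<in> borel_measurable M \<and> integrable M (\<lambda>x. (f x)\<^sup>2)"

lemma integrable_mult_sq_integrable:
  assumes "sq_integrable M f" "sq_integrable M g"
  shows "integrable M (\<lambda>x. f x * g x)"
proof (rule Bochner_Integration.integrable_bound)
  show "integrable M (\<lambda>x. (f x)\<^sup>2 + (g x)\<^sup>2)" "(\<lambda>x. f x * g x) \<in> borel_measurable M"
    using assms by (auto simp: sq_integrable_def)
  have "\<bar>f x * g x\<bar> \<le> (f x)\<^sup>2 + (g x)\<^sup>2" for x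
  proof -
    have "2 * (\<bar>f x\<bar> * \<bar>g x\<bar>) \<le> (f x)\<^sup>2 + (g x)\<^sup>2"
      using sum_squares_bound[of "\<bar>f x\<bar>" "\<bar>g x\<bar>"] by (simp add: mult.assoc)
    then show ?thesis
      unfolding abs_mult using zero_le_mult_iff[of "\<bar>f x\<bar>" "\<bar>g x\<bar>"] by linarith
  qed
  then show "AE x in M. norm (f x * g x) \<le> norm ((f x)\<^sup>2 + (g x)\<^sup>2)"
    by simp
qed

lemma (in finite_measure) sq_integrable_integrable: "sq_integrable M f \<Longrightarrow> integrable M f"
  unfolding sq_integrable_def by (blast intro: square_integrable_imp_integrable)

lemma (in finite_measure) sq_integrable_const: "sq_integrable M (\<lambda>x. c)"
  unfolding sq_integrable_def by simp

lemma sq_integrable_add: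
  assumes "sq_integrable M f" "sq_integrable M g"
  shows "sq_integrable M (\<lambda>x. f x + g x)"
proof -
  have "(\<lambda>x. (f x + g x)\<^sup>2) = (\<lambda>x. (f x)\<^sup>2 + 2 * (f x * g x) + (g x)\<^sup>2)"
    by (simp add: power2_sum algebra_simps)
  then show ?thesis
    using assms integrable_mult_sq_integrable[OF assms] by (auto simp: sq_integrable_def)
qed

lemma sq_integrable_cmult: "sq_integrable M f \<Longrightarrow> sq_integrable M (\<lambda>x. c * f x)"
  unfolding sq_integrable_def by (auto simp: power_mult_distrib)

lemma sq_integrable_diff:
  "sq_integrable M f \<Longrightarrow> sq_integrable M g \<Longrightarrow> sq_integrable M (\<lambda>x. f x - g x)"
  using sq_integrable_add[of M f "\<lambda>x. (-1) * g x"] sq_integrable_cmult[of M g "-1"] by simp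

lemma sq_integrable_sum:
  "finite I \<Longrightarrow> (\<And>i. i \<in> I \<Longrightarrow> sq_integrable M (f i)) \<Longrightarrow> sq_integrable M (\<lambda>x. \<Sum>i\<in>I. f i x)"
proof (induction I rule: finite_induct)
  case empty
  then show ?case by (simp add: sq_integrable_def)
next
  case (insert i I)
  then show ?case by (simp add: sq_integrable_add)
qed

lemma integral_lincomb_mult:
  assumes "finite I" "\<And>i. i \<in> I \<Longrightarrow> sq_integrable M (f i)" "sq_integrable M g"
  shows "(\<integral>x. (\<Sum>i\<in>I. a i * f i x) * g x \<partial>M) = (\<Sum>i\<in>I. a i * (\<integral>x. f i x * g x \<partial>M))"
proof -
  have "(\<lambda>x. (\<Sum>i\<in>I. a i * f i x) * g x) = (\<lambda>x. \<Sum>i\<in>I. a i * (f i x * g x))"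
    by (simp add: sum_distrib_right mult.assoc)
  then show ?thesis
    using assms by (simp add: integrable_mult_sq_integrable)
qed

lemma integrable_bounded_mult:
  fixes v f :: "'a \<Rightarrow> real"
  assumes "AE x in M. \<bar>v x\<bar> \<le> 1" "v \<in> borel_measurable M" "integrable M f"
  shows "integrable M (\<lambda>x. v x * f x)"
proof (rule Bochner_Integration.integrable_bound[OF assms(3)])
  show "(\<lambda>x. v x * f x) \<in> borel_measurable M"
    using assms by simp
  show "AE x in M. norm (v x * f x) \<le> norm (f x)"
    using assms(1) by eventually_elim (simp add: abs_mult mult_left_le_one_le)
qed

lemma sq_integrable_bounded_mult:
  fixes v f :: "'a \<Rightarrow> real"
  assumes "AE x in M. \<bar>v x\<bar> \<le> 1" "v \<in> borel_measurable M" "sq_integrable M f"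
  shows "sq_integrable M (\<lambda>x. v x * f x)"
proof -
  have "AE x in M. \<bar>(v x)\<^sup>2\<bar> \<le> 1"
    using assms(1) by eventually_elim (simp add: abs_square_le_1)
  then have "integrable M (\<lambda>x. (v x)\<^sup>2 * (f x)\<^sup>2)"
    using assms(2,3) unfolding sq_integrable_def by (intro integrable_bounded_mult) auto
  then show ?thesis
    using assms(2,3) unfolding sq_integrable_def by (auto simp: power_mult_distrib)
qed

section \<open>Least squares and linear projections\<close>

lemma quadratic_nonneg_imp_linear_zero:
  fixes A B :: real
  assumes nonneg: "\<And>t. 0 \<le> t\<^sup>2 * B - 2 * t * A"
  shows "A = 0"
proof -
  define t where "t = A / (\<bar>B\<bar> + 1)"
  have pt: "(\<bar>B\<bar> + 1) * t = A"
    unfolding t_def by (simp add: add_pos_nonneg)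
  have "0 \<le> (\<bar>B\<bar> + 1)\<^sup>2 * (t\<^sup>2 * B - 2 * t * A)"
    using nonneg[of t] by simp
  also have "\<dots> = ((\<bar>B\<bar> + 1) * t)\<^sup>2 * B - 2 * ((\<bar>B\<bar> + 1) * t) * A * (\<bar>B\<bar> + 1)"
    by (simp add: power2_eq_square algebra_simps)
  also have "\<dots> = A\<^sup>2 * (B - 2 * \<bar>B\<bar> - 2)"
    unfolding pt by (simp add: power2_eq_square algebra_simps)
  finally have "0 \<le> A\<^sup>2 * (B - 2 * \<bar>B\<bar> - 2)" .
  moreover have "B - 2 * \<bar>B\<bar> - 2 < 0" by linarith
  ultimately show ?thesis
    by (simp add: zero_le_mult_iff)
qed

lemma sum_sq_min_imp_orthogonal:
  fixes r z :: "'i \<Rightarrow> real"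
  assumes min: "\<And>t. (\<Sum>i\<in>I. (r i)\<^sup>2) \<le> (\<Sum>i\<in>I. (r i - t * z i)\<^sup>2)"
  shows "(\<Sum>i\<in>I. r i * z i) = 0"
proof (rule quadratic_nonneg_imp_linear_zero)
  fix t
  have "(\<Sum>i\<in>I. (r i - t * z i)\<^sup>2)
      = (\<Sum>i\<in>I. (r i)\<^sup>2 + (t\<^sup>2 * (z i)\<^sup>2 - 2 * t * (r i * z i)))"
    by (rule sum.cong) (simp_all add: power2_diff power_mult_distrib)
  also have "\<dots> = (\<Sum>i\<in>I. (r i)\<^sup>2) + (t\<^sup>2 * (\<Sum>i\<in>I. (z i)\<^sup>2) - 2 * t * (\<Sum>i\<in>I. r i * z i))"
    by (simp add: sum.distrib sum_subtractf sum_distrib_left)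
  finally show "0 \<le> t\<^sup>2 * (\<Sum>i\<in>I. (z i)\<^sup>2) - 2 * t * (\<Sum>i\<in>I. r i * z i)"
    using min[of t] by linarith
qed

lemma integral_sq_min_imp_orthogonal:
  assumes R: "sq_integrable M R" and V: "sq_integrable M V"
    and min: "\<And>t. (\<integral>x. (R x)\<^sup>2 \<partial>M) \<le> (\<integral>x. (R x - t * V x)\<^sup>2 \<partial>M)"
  shows "(\<integral>x. R x * V x \<partial>M) = 0"
proof (rule quadratic_nonneg_imp_linear_zero)
  fix t
  have "(\<lambda>x. (R x - t * V x)\<^sup>2) = (\<lambda>x. (R x)\<^sup>2 + (t\<^sup>2 * (V x)\<^sup>2 - 2 * t * (R x * V x)))"
    by (simp add: fun_eq_iff power2_diff power_mult_distrib algebra_simps)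
  then have "(\<integral>x. (R x - t * V x)\<^sup>2 \<partial>M)
      = (\<integral>x. (R x)\<^sup>2 \<partial>M) + (t\<^sup>2 * (\<integral>x. (V x)\<^sup>2 \<partial>M) - 2 * t * (\<integral>x. R x * V x \<partial>M))"
    using R V integrable_mult_sq_integrable[OF R V] by (simp add: sq_integrable_def)
  then show "0 \<le> t\<^sup>2 * (\<integral>x. (V x)\<^sup>2 \<partial>M) - 2 * t * (\<integral>x. R x * V x \<partial>M)"
    using min[of t] by linarith
qed

lemma sum_mult_fun_upd_add:
  fixes v b :: "nat \<Rightarrow> real"
  assumes "j < K"
  shows "(\<Sum>j'<K. v j' * (b(j := b j + t)) j') = (\<Sum>j'<K. v j' * b j') + t * v j"
proof -
  have "(\<Sum>j'<K. v j' * (b(j := b j + t)) j') = (\<Sum>j'<K. v j' * b j' + (if j' = j then t * v j else 0))"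
    by (intro sum.cong) (auto simp: algebra_simps)
  then show ?thesis
    using assms by (simp add: sum.distrib)
qed

lemma least_squares_normal_equations:
  fixes y :: "'i \<Rightarrow> real" and x :: "'i \<Rightarrow> nat \<Rightarrow> real"
  assumes min: "\<forall>a' b'. (\<Sum>i\<in>I. (y i - a - (\<Sum>j<K. x i j * b j))\<^sup>2)
                      \<le> (\<Sum>i\<in>I. (y i - a' - (\<Sum>j<K. x i j * b' j))\<^sup>2)"
  shows "(\<Sum>i\<in>I. y i - a - (\<Sum>j<K. x i j * b j)) = 0"
    and "\<And>j. j < K \<Longrightarrow> (\<Sum>i\<in>I. (y i - a - (\<Sum>j<K. x i j * b j)) * x i j) = 0"
proof -
  define res where "res i = y i - a - (\<Sum>j<K. x i j * b j)" for i
  have "(\<Sum>i\<in>I. res i * 1) = 0"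
  proof (rule sum_sq_min_imp_orthogonal)
    show "(\<Sum>i\<in>I. (res i)\<^sup>2) \<le> (\<Sum>i\<in>I. (res i - t * 1)\<^sup>2)" for t
      using min[rule_format, of "a + t" b] unfolding res_def by (simp add: algebra_simps)
  qed
  then show "(\<Sum>i\<in>I. y i - a - (\<Sum>j<K. x i j * b j)) = 0"
    unfolding res_def by simp
  fix j assume j: "j < K"
  have "(\<Sum>i\<in>I. res i * x i j) = 0"
  proof (rule sum_sq_min_imp_orthogonal)
    show "(\<Sum>i\<in>I. (res i)\<^sup>2) \<le> (\<Sum>i\<in>I. (res i - t * x i j)\<^sup>2)" for t
      using min[rule_format, of a "b(j := b j + t)"]
      unfolding res_def sum_mult_fun_upd_add[OF j] by (simp add: algebra_simps)
  qed
  then show "(\<Sum>i\<in>I. (y i - a - (\<Sum>j<K. x i j * b j)) * x i j) = 0"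
    unfolding res_def .
qed

lemma lin_proj_residual_orthogonal:
  assumes lp: "is_lin_proj M K V Z b" and j: "j < K"
    and Z: "sq_integrable M Z" and V: "\<And>j. j < K \<Longrightarrow> sq_integrable M (\<lambda>x. V x j)"
  shows "(\<integral>x. (Z x - (\<Sum>j'<K. V x j' * b j')) * V x j \<partial>M) = 0"
proof (rule integral_sq_min_imp_orthogonal)
  have "sq_integrable M (\<lambda>x. V x j' * b j')" if "j' < K" for j'
    using sq_integrable_cmult[OF V[OF that], of "b j'"] by (simp add: mult.commute)
  then show "sq_integrable M (\<lambda>x. Z x - (\<Sum>j'<K. V x j' * b j'))"
    using Z by (intro sq_integrable_diff sq_integrable_sum) auto
  show "sq_integrable M (\<lambda>x. V x j)" using V j .
  show "(\<integral>x. (Z x - (\<Sum>j'<K. V x j' * b j'))\<^sup>2 \<partial>M)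
      \<le> (\<integral>x. (Z x - (\<Sum>j'<K. V x j' * b j') - t * V x j)\<^sup>2 \<partial>M)" for t
  proof -
    have "(\<lambda>x. (Z x - (\<Sum>j'<K. V x j' * (b(j := b j + t)) j'))\<^sup>2)
        = (\<lambda>x. (Z x - (\<Sum>j'<K. V x j' * b j') - t * V x j)\<^sup>2)"
      by (subst sum_mult_fun_upd_add[OF j]) (simp add: diff_diff_eq)
    moreover have "(\<integral>x. (Z x - (\<Sum>j'<K. V x j' * b j'))\<^sup>2 \<partial>M)
        \<le> (\<integral>x. (Z x - (\<Sum>j'<K. V x j' * (b(j := b j + t)) j'))\<^sup>2 \<partial>M)"
      using lp unfolding is_lin_proj_def by blast
    ultimately show ?thesis by simp
  qed
qed

section \<open>Gram-Schmidt orthonormalisation\<close>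

definition is_lincomb :: "(nat \<Rightarrow> 'a \<Rightarrow> real) \<Rightarrow> nat \<Rightarrow> ('a \<Rightarrow> real) \<Rightarrow> bool" where
  "is_lincomb F m h \<longleftrightarrow> (\<exists>t. \<forall>x. h x = (\<Sum>j<m. t j * F j x))"

lemma is_lincomb_Suc:
  assumes "is_lincomb F m h"
  shows "is_lincomb F (Suc m) h"
proof -
  obtain t where "\<And>x. h x = (\<Sum>j<m. t j * F j x)"
    using assms unfolding is_lincomb_def by blast
  then show ?thesis
    unfolding is_lincomb_def by (intro exI[of _ "t(m := 0)"]) simp
qed

lemma is_lincomb_last: "is_lincomb F (Suc m) (F m)"
  unfolding is_lincomb_def by (auto intro!: exI[of _ "\<lambda>j. if j = m then 1 else 0"])

lemma is_lincomb_sum: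
  assumes "finite I" "\<And>k. k \<in> I \<Longrightarrow> is_lincomb F m (Z k)"
  shows "is_lincomb F m (\<lambda>x. \<Sum>k\<in>I. a k * Z k x)"
proof -
  obtain t where t: "\<And>k x. k \<in> I \<Longrightarrow> Z k x = (\<Sum>j<m. t k j * F j x)"
    using assms(2) unfolding is_lincomb_def by metis
  have "(\<Sum>k\<in>I. a k * Z k x) = (\<Sum>j<m. (\<Sum>k\<in>I. a k * t k j) * F j x)" for x
  proof -
    have "(\<Sum>k\<in>I. a k * Z k x) = (\<Sum>k\<in>I. \<Sum>j<m. a k * t k j * F j x)"
      by (intro sum.cong) (simp_all add: t sum_distrib_left mult.assoc)
    also have "\<dots> = (\<Sum>j<m. (\<Sum>k\<in>I. a k * t k j) * F j x)"
      by (subst sum.swap) (simp add: sum_distrib_right)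
    finally show ?thesis .
  qed
  then show ?thesis
    unfolding is_lincomb_def by (intro exI[of _ "\<lambda>j. \<Sum>k\<in>I. a k * t k j"]) simp
qed

lemma is_lincomb_scaled_diff:
  assumes "is_lincomb F m f" "is_lincomb F m g"
  shows "is_lincomb F m (\<lambda>x. q * (f x - g x))"
proof -
  obtain s t where "\<And>x. f x = (\<Sum>j<m. s j * F j x)" "\<And>x. g x = (\<Sum>j<m. t j * F j x)"
    using assms unfolding is_lincomb_def by metis
  then have "q * (f x - g x) = (\<Sum>j<m. (q * (s j - t j)) * F j x)" for x
    by (simp add: sum_distrib_left sum_subtractf[symmetric] algebra_simps)
  then show ?thesis
    unfolding is_lincomb_def by (intro exI[of _ "\<lambda>j. q * (s j - t j)"]) simp
qed

lemma sq_integrable_lincomb: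
  assumes "is_lincomb F m h" "\<And>j. j < m \<Longrightarrow> sq_integrable M (F j)"
  shows "sq_integrable M h"
proof -
  obtain t where "h = (\<lambda>x. \<Sum>j<m. t j * F j x)"
    using assms(1) unfolding is_lincomb_def by blast
  then show ?thesis
    using assms(2) by (auto intro!: sq_integrable_sum sq_integrable_cmult)
qed

definition L2_orthonormal :: "'a measure \<Rightarrow> nat \<Rightarrow> (nat \<Rightarrow> 'a \<Rightarrow> real) \<Rightarrow> bool" where
  "L2_orthonormal M r Z \<longleftrightarrow> (\<forall>k<r. \<forall>l<r. (\<integral>x. Z k x * Z l x \<partial>M) = (if k = l then 1 else 0))"

lemma L2_orthonormal_residual:
  assumes ON: "L2_orthonormal M r Z" and Z: "\<And>k. k < r \<Longrightarrow> sq_integrable M (Z k)"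
    and f: "sq_integrable M f" and l: "l < r"
  shows "(\<integral>x. (f x - (\<Sum>k<r. (\<integral>y. f y * Z k y \<partial>M) * Z k x)) * Z l x \<partial>M) = 0"
proof -
  have "(\<integral>x. (f x - (\<Sum>k<r. (\<integral>y. f y * Z k y \<partial>M) * Z k x)) * Z l x \<partial>M)
      = (\<integral>x. f x * Z l x \<partial>M) - (\<integral>x. (\<Sum>k<r. (\<integral>y. f y * Z k y \<partial>M) * Z k x) * Z l x \<partial>M)"
    unfolding left_diff_distrib using f Z l
    by (intro Bochner_Integration.integral_diff integrable_mult_sq_integrable
        sq_integrable_sum sq_integrable_cmult) auto
  also have "(\<integral>x. (\<Sum>k<r. (\<integral>y. f y * Z k y \<partial>M) * Z k x) * Z l x \<partial>M)
      = (\<Sum>k<r. (\<integral>y. f y * Z k y \<partial>M) * (if k = l then 1 else 0))"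
  proof -
    have "(\<integral>x. (\<Sum>k<r. (\<integral>y. f y * Z k y \<partial>M) * Z k x) * Z l x \<partial>M)
        = (\<Sum>k<r. (\<integral>y. f y * Z k y \<partial>M) * (\<integral>x. Z k x * Z l x \<partial>M))"
      by (rule integral_lincomb_mult) (use Z l in auto)
    then show ?thesis
      using ON l unfolding L2_orthonormal_def by (auto intro: sum.cong)
  qed
  finally show ?thesis
    using l by (simp add: if_distrib cong: if_cong)
qed

lemma L2_orthonormal_fun_upd:
  assumes ON: "L2_orthonormal M r Z" and orth: "\<And>l. l < r \<Longrightarrow> (\<integral>x. e x * Z l x \<partial>M) = 0"
    and norm: "(\<integral>x. e x * e x \<partial>M) = 1"
  shows "L2_orthonormal M (Suc r) (Z(r := e))"
  unfolding L2_orthonormal_def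
proof (intro allI impI)
  fix k l assume "k < Suc r" "l < Suc r"
  then consider "k < r" "l < r" | "k = r" "l < r" | "k < r" "l = r" | "k = r" "l = r"
    by linarith
  then show "(\<integral>x. (Z(r := e)) k x * (Z(r := e)) l x \<partial>M) = (if k = l then 1 else 0)"
  proof cases
    case 1
    then show ?thesis using ON by (simp add: L2_orthonormal_def)
  next
    case 2
    then show ?thesis using orth by simp
  next
    case 3
    then show ?thesis using orth[of k] by (simp add: mult.commute)
  qed (simp add: norm)
qed

lemma L2_orthonormal_extend:
  assumes ON: "L2_orthonormal M r Z" and Z: "\<And>k. k < r \<Longrightarrow> sq_integrable M (Z k)"
    and f: "sq_integrable M f"
  obtains r' Z' where "r' = r \<or> r' = Suc r" "\<And>k. k < r \<Longrightarrow> Z' k = Z k" "L2_orthonormal M r' Z'"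
    "r' = Suc r \<Longrightarrow> \<exists>q a. \<forall>x. Z' r x = q * (f x - (\<Sum>k<r. a k * Z k x))"
    "\<exists>c. AE x in M. f x = (\<Sum>k<r'. c k * Z' k x)"
proof -
  define a where "a k = (\<integral>y. f y * Z k y \<partial>M)" for k
  define e where "e x = f x - (\<Sum>k<r. a k * Z k x)" for x
  define s where "s = (\<integral>x. (e x)\<^sup>2 \<partial>M)"
  have e: "sq_integrable M e"
    unfolding e_def using f Z by (intro sq_integrable_diff sq_integrable_sum sq_integrable_cmult) auto
  have eZ: "(\<integral>x. e x * Z l x \<partial>M) = 0" if "l < r" for l
    unfolding e_def a_def using L2_orthonormal_residual[OF ON Z f that] .
  have "s \<ge> 0"
    unfolding s_def by simp
  then consider "s = 0" | "s > 0" by linarith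
  then show ?thesis
  proof cases
    case 1
    then have "AE x in M. (e x)\<^sup>2 = 0"
      using e unfolding s_def sq_integrable_def by (subst integral_nonneg_eq_0_iff_AE[symmetric]) auto
    then have "AE x in M. f x = (\<Sum>k<r. a k * Z k x)"
      by eventually_elim (simp add: e_def)
    then show ?thesis
      by (intro that[of r Z]) (use ON in auto)
  next
    case 2
    define q where "q = 1 / sqrt s"
    have "(\<integral>x. q * e x * Z l x \<partial>M) = 0" if "l < r" for l
      using eZ[OF that] by (simp add: mult.assoc)
    moreover have "(\<integral>x. q * e x * (q * e x) \<partial>M) = 1"
      using 2 unfolding s_def q_def by (simp add: power2_eq_square mult_ac power_divide)
    ultimately have ON': "L2_orthonormal M (Suc r) (Z(r := (\<lambda>x. q * e x)))"
      by (rule L2_orthonormal_fun_upd[OF ON])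
    have "f x = (\<Sum>k<Suc r. (a(r := sqrt s)) k * (Z(r := (\<lambda>x. q * e x))) k x)" for x
      using 2 by (simp add: e_def q_def)
    then have "\<exists>c. AE x in M. f x = (\<Sum>k<Suc r. c k * (Z(r := (\<lambda>x. q * e x))) k x)"
      by blast
    moreover have "\<exists>q' a'. \<forall>x. (Z(r := (\<lambda>x. q * e x))) r x = q' * (f x - (\<Sum>k<r. a' k * Z k x))"
      by (intro exI[of _ q] exI[of _ a]) (simp add: e_def)
    ultimately show ?thesis
      by (intro that[of "Suc r" "Z(r := (\<lambda>x. q * e x))"] ON') simp_all
  qed
qed

lemma gram_schmidt_L2:
  assumes "\<And>j. j < m \<Longrightarrow> sq_integrable M (F j)"
  shows "\<exists>r Z. (\<forall>k<r. is_lincomb F m (Z k)) \<and> L2_orthonormal M r Z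
           \<and> (\<forall>j<m. \<exists>c. AE x in M. F j x = (\<Sum>k<r. c k * Z k x))"
  using assms
proof (induction m)
  case 0
  show ?case
    by (rule exI[of _ 0]) (simp add: L2_orthonormal_def)
next
  case (Suc m)
  then obtain r Z where lc: "\<forall>k<r. is_lincomb F m (Z k)" and ON: "L2_orthonormal M r Z"
    and rep: "\<forall>j<m. \<exists>c. AE x in M. F j x = (\<Sum>k<r. c k * Z k x)"
    by auto
  have Z: "sq_integrable M (Z k)" if "k < r" for k
    using lc that Suc.prems by (auto intro: sq_integrable_lincomb)
  obtain r' Z' where r': "r' = r \<or> r' = Suc r" and old: "\<And>k. k < r \<Longrightarrow> Z' k = Z k"
    and ON': "L2_orthonormal M r' Z'"
    and new: "r' = Suc r \<Longrightarrow> \<exists>q a. \<forall>x. Z' r x = q * (F m x - (\<Sum>k<r. a k * Z k x))"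
    and last: "\<exists>c. AE x in M. F m x = (\<Sum>k<r'. c k * Z' k x)"
    using L2_orthonormal_extend[OF ON Z Suc.prems[OF lessI]] by blast
  have "is_lincomb F (Suc m) (Z' k)" if "k < r'" for k
  proof (cases "k < r")
    case True
    then show ?thesis using lc old by (simp add: is_lincomb_Suc)
  next
    case False
    with r' that have k: "k = r" and "r' = Suc r" by auto
    then obtain q a where Zr: "Z' r = (\<lambda>x. q * (F m x - (\<Sum>k<r. a k * Z k x)))"
      using new by blast
    have "is_lincomb F (Suc m) (\<lambda>x. \<Sum>k<r. a k * Z k x)"
      using lc by (intro is_lincomb_sum) (auto intro: is_lincomb_Suc)
    then have "is_lincomb F (Suc m) (\<lambda>x. q * (F m x - (\<Sum>k<r. a k * Z k x)))"
      by (rule is_lincomb_scaled_diff[OF is_lincomb_last])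
    then show ?thesis
      unfolding k Zr .
  qed
  moreover have "\<exists>c. AE x in M. F j x = (\<Sum>k<r'. c k * Z' k x)" if "j < Suc m" for j
  proof (cases "j < m")
    case True
    then obtain c where "AE x in M. F j x = (\<Sum>k<r. c k * Z k x)"
      using rep by blast
    moreover have "(\<Sum>k<r'. (if k < r then c k else 0) * Z' k x) = (\<Sum>k<r. c k * Z k x)" for x
      using r' old by auto
    ultimately have "AE x in M. F j x = (\<Sum>k<r'. (if k < r then c k else 0) * Z' k x)"
      by simp
    then show ?thesis
      by (intro exI[of _ "\<lambda>k. if k < r then c k else 0"])
  next
    case False
    with that have "j = m" by simp
    then show ?thesis using last by simp
  qed
  ultimately show ?case
    using ON' by blast
qed

section \<open>Stochastic order symbols\<close>

text \<open>Outer probabilities, as in \<^const>\<open>o_p1\<close>: the statistics of interest need not be measurable,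
  since the OLS estimates are arbitrary minimisers.\<close>

definition outer_prob_less :: "'a measure \<Rightarrow> ('a \<Rightarrow> bool) \<Rightarrow> real \<Rightarrow> bool" where
  "outer_prob_less M P \<delta> \<longleftrightarrow> (\<exists>A\<in>sets M. {\<omega>\<in>space M. P \<omega>} \<subseteq> A \<and> measure M A < \<delta>)"

lemma outer_prob_less_mono:
  assumes "outer_prob_less M Q \<delta>" "\<And>\<omega>. \<omega> \<in> space M \<Longrightarrow> P \<omega> \<Longrightarrow> Q \<omega>" "\<delta> \<le> \<delta>'"
  shows "outer_prob_less M P \<delta>'"
proof -
  obtain A where "A \<in> sets M" "{\<omega>\<in>space M. Q \<omega>} \<subseteq> A" "measure M A < \<delta>"
    using assms(1) unfolding outer_prob_less_def by blast
  moreover have "{\<omega>\<in>space M. P \<omega>} \<subseteq> {\<omega>\<in>space M. Q \<omega>}"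
    using assms(2) by blast
  ultimately show ?thesis
    using assms(3) unfolding outer_prob_less_def by (intro bexI[of _ A]) auto
qed

lemma outer_prob_less_disj:
  assumes "outer_prob_less M P \<delta>\<^sub>1" "outer_prob_less M Q \<delta>\<^sub>2"
  shows "outer_prob_less M (\<lambda>\<omega>. P \<omega> \<or> Q \<omega>) (\<delta>\<^sub>1 + \<delta>\<^sub>2)"
proof -
  obtain A B where "A \<in> sets M" "{\<omega>\<in>space M. P \<omega>} \<subseteq> A" "measure M A < \<delta>\<^sub>1"
    and "B \<in> sets M" "{\<omega>\<in>space M. Q \<omega>} \<subseteq> B" "measure M B < \<delta>\<^sub>2"
    using assms unfolding outer_prob_less_def by blast
  moreover from this have "measure M (A \<union> B) < \<delta>\<^sub>1 + \<delta>\<^sub>2"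
    using measure_Un_le[of A M B] by linarith
  ultimately show ?thesis
    unfolding outer_prob_less_def by (intro bexI[of _ "A \<union> B"]) auto
qed

lemma outer_prob_less_measurable:
  "{\<omega>\<in>space M. P \<omega>} \<in> sets M \<Longrightarrow> measure M {\<omega>\<in>space M. P \<omega>} < \<delta> \<Longrightarrow> outer_prob_less M P \<delta>"
  unfolding outer_prob_less_def by blast

lemma outer_prob_less_AE:
  assumes "AE \<omega> in M. \<not> P \<omega>" "\<delta> > 0"
  shows "outer_prob_less M P \<delta>"
proof -
  obtain A where "{\<omega>\<in>space M. P \<omega>} \<subseteq> A" "A \<in> sets M" "emeasure M A = 0"
    using assms(1) by (auto elim!: AE_E)
  then show ?thesis
    using assms(2) unfolding outer_prob_less_def by (auto simp: measure_def)
qed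

lemma o_p1_eventually:
  "o_p1 M X \<longleftrightarrow>
     (\<forall>\<epsilon>>0. \<forall>\<delta>>0. eventually (\<lambda>N. outer_prob_less M (\<lambda>\<omega>. \<epsilon> < \<bar>X N \<omega>\<bar>) \<delta>) sequentially)"
  unfolding o_p1_def outer_prob_less_def eventually_sequentially ..

definition bounded_in_prob :: "'a measure \<Rightarrow> (nat \<Rightarrow> 'a \<Rightarrow> real) \<Rightarrow> bool" where
  "bounded_in_prob M X \<longleftrightarrow>
     (\<forall>\<delta>>0. \<exists>C. eventually (\<lambda>N. outer_prob_less M (\<lambda>\<omega>. C < \<bar>X N \<omega>\<bar>) \<delta>) sequentially)"

lemma o_p1_add:
  assumes "o_p1 M X" "o_p1 M Y"
  shows "o_p1 M (\<lambda>N \<omega>. X N \<omega> + Y N \<omega>)"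
  unfolding o_p1_eventually
proof (intro allI impI)
  fix \<epsilon> \<delta> :: real assume "\<epsilon> > 0" "\<delta> > 0"
  then have "eventually (\<lambda>N. outer_prob_less M (\<lambda>\<omega>. \<epsilon>/2 < \<bar>X N \<omega>\<bar>) (\<delta>/2)
                          \<and> outer_prob_less M (\<lambda>\<omega>. \<epsilon>/2 < \<bar>Y N \<omega>\<bar>) (\<delta>/2)) sequentially"
    using assms[unfolded o_p1_eventually, rule_format, of "\<epsilon>/2" "\<delta>/2"]
    by (intro eventually_conj) simp_all
  then show "eventually (\<lambda>N. outer_prob_less M (\<lambda>\<omega>. \<epsilon> < \<bar>X N \<omega> + Y N \<omega>\<bar>) \<delta>) sequentially"
  proof eventually_elim
    case (elim N)
    then have "outer_prob_less M (\<lambda>\<omega>. \<epsilon>/2 < \<bar>X N \<omega>\<bar> \<or> \<epsilon>/2 < \<bar>Y N \<omega>\<bar>) (\<delta>/2 + \<delta>/2)"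
      by (intro outer_prob_less_disj) auto
    then show ?case
      by (rule outer_prob_less_mono) auto
  qed
qed

lemma o_p1_sum:
  assumes "finite I" "\<And>k. k \<in> I \<Longrightarrow> o_p1 M (X k)"
  shows "o_p1 M (\<lambda>N \<omega>. \<Sum>k\<in>I. X k N \<omega>)"
  using assms
proof (induction I rule: finite_induct)
  case empty
  then show ?case by (auto simp: o_p1_def intro!: bexI[of _ "{}"])
next
  case (insert k I)
  then show ?case by (simp add: o_p1_add)
qed

lemma o_p1_abs: "o_p1 M X \<Longrightarrow> o_p1 M (\<lambda>N \<omega>. \<bar>X N \<omega>\<bar>)"
  unfolding o_p1_def by simp

lemma o_p1_AE_cong:
  assumes "o_p1 M X" "AE \<omega> in M. \<forall>N. Y N \<omega> = X N \<omega>"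
  shows "o_p1 M Y"
  unfolding o_p1_eventually
proof (intro allI impI)
  fix \<epsilon> \<delta> :: real assume "\<epsilon> > 0" "\<delta> > 0"
  have "AE \<omega> in M. \<not> (\<exists>N. Y N \<omega> \<noteq> X N \<omega>)"
    using assms(2) by simp
  then have null: "outer_prob_less M (\<lambda>\<omega>. \<exists>N. Y N \<omega> \<noteq> X N \<omega>) (\<delta>/2)"
    using \<open>\<delta> > 0\<close> by (intro outer_prob_less_AE) simp_all
  have "eventually (\<lambda>N. outer_prob_less M (\<lambda>\<omega>. \<epsilon> < \<bar>X N \<omega>\<bar>) (\<delta>/2)) sequentially"
    using assms(1) \<open>\<epsilon> > 0\<close> \<open>\<delta> > 0\<close> unfolding o_p1_eventually by simp
  then show "eventually (\<lambda>N. outer_prob_less M (\<lambda>\<omega>. \<epsilon> < \<bar>Y N \<omega>\<bar>) \<delta>) sequentially"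
  proof eventually_elim
    case (elim N)
    with null have "outer_prob_less M (\<lambda>\<omega>. (\<exists>N. Y N \<omega> \<noteq> X N \<omega>) \<or> \<epsilon> < \<bar>X N \<omega>\<bar>) (\<delta>/2 + \<delta>/2)"
      by (intro outer_prob_less_disj)
    then show ?case
      by (rule outer_prob_less_mono) (auto intro: exI[of _ N])
  qed
qed

lemma bounded_in_prob_add:
  assumes "bounded_in_prob M X" "bounded_in_prob M Y"
  shows "bounded_in_prob M (\<lambda>N \<omega>. X N \<omega> + Y N \<omega>)"
  unfolding bounded_in_prob_def
proof (intro allI impI)
  fix \<delta> :: real assume "\<delta> > 0"
  then obtain C D where
    "eventually (\<lambda>N. outer_prob_less M (\<lambda>\<omega>. C < \<bar>X N \<omega>\<bar>) (\<delta>/2)) sequentially"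
    "eventually (\<lambda>N. outer_prob_less M (\<lambda>\<omega>. D < \<bar>Y N \<omega>\<bar>) (\<delta>/2)) sequentially"
    using assms unfolding bounded_in_prob_def by (meson half_gt_zero)
  then have "eventually (\<lambda>N. outer_prob_less M (\<lambda>\<omega>. C + D < \<bar>X N \<omega> + Y N \<omega>\<bar>) \<delta>) sequentially"
  proof eventually_elim
    case (elim N)
    then have "outer_prob_less M (\<lambda>\<omega>. C < \<bar>X N \<omega>\<bar> \<or> D < \<bar>Y N \<omega>\<bar>) (\<delta>/2 + \<delta>/2)"
      by (intro outer_prob_less_disj) auto
    then show ?case
      by (rule outer_prob_less_mono) auto
  qed
  then show "\<exists>C. eventually (\<lambda>N. outer_prob_less M (\<lambda>\<omega>. C < \<bar>X N \<omega> + Y N \<omega>\<bar>) \<delta>) sequentially" ..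
qed

lemma bounded_in_prob_sum:
  assumes "finite I" "\<And>k. k \<in> I \<Longrightarrow> bounded_in_prob M (X k)"
  shows "bounded_in_prob M (\<lambda>N \<omega>. \<Sum>k\<in>I. X k N \<omega>)"
  using assms
proof (induction I rule: finite_induct)
  case empty
  then show ?case by (auto simp: bounded_in_prob_def outer_prob_less_def intro!: exI[of _ 0] bexI[of _ "{}"])
next
  case (insert k I)
  then show ?case by (simp add: bounded_in_prob_add)
qed

lemma bounded_in_prob_abs: "bounded_in_prob M X \<Longrightarrow> bounded_in_prob M (\<lambda>N \<omega>. \<bar>X N \<omega>\<bar>)"
  unfolding bounded_in_prob_def by simp

lemma bounded_in_prob_cmult:
  assumes "bounded_in_prob M X"
  shows "bounded_in_prob M (\<lambda>N \<omega>. a * X N \<omega>)"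
  unfolding bounded_in_prob_def
proof (intro allI impI)
  fix \<delta> :: real assume "\<delta> > 0"
  then obtain C where "eventually (\<lambda>N. outer_prob_less M (\<lambda>\<omega>. C < \<bar>X N \<omega>\<bar>) \<delta>) sequentially"
    using assms unfolding bounded_in_prob_def by blast
  moreover have "C < \<bar>X N \<omega>\<bar>" if "\<bar>a\<bar> * \<bar>C\<bar> < \<bar>a * X N \<omega>\<bar>" for N \<omega>
  proof (rule ccontr)
    assume "\<not> C < \<bar>X N \<omega>\<bar>"
    then have "\<bar>a\<bar> * \<bar>X N \<omega>\<bar> \<le> \<bar>a\<bar> * \<bar>C\<bar>"
      by (intro mult_left_mono) auto
    with that show False
      by (simp add: abs_mult)
  qed
  ultimately have "eventually (\<lambda>N. outer_prob_less M (\<lambda>\<omega>. \<bar>a\<bar> * \<bar>C\<bar> < \<bar>a * X N \<omega>\<bar>) \<delta>) sequentially"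
    by (auto elim!: eventually_mono intro: outer_prob_less_mono)
  then show "\<exists>C. eventually (\<lambda>N. outer_prob_less M (\<lambda>\<omega>. C < \<bar>a * X N \<omega>\<bar>) \<delta>) sequentially" ..
qed

lemma o_p1_bounded_product:
  assumes X: "o_p1 M X" and Y: "bounded_in_prob M Y" and "c > 0"
    and bound: "AE \<omega> in M. \<forall>N. \<bar>X N \<omega>\<bar> \<le> c \<longrightarrow> \<bar>T N \<omega>\<bar> \<le> \<bar>X N \<omega>\<bar> * \<bar>Y N \<omega>\<bar>"
  shows "o_p1 M T"
  unfolding o_p1_eventually
proof (intro allI impI)
  fix \<epsilon> \<delta> :: real assume "\<epsilon> > 0" "\<delta> > 0"
  obtain C where C: "eventually (\<lambda>N. outer_prob_less M (\<lambda>\<omega>. C < \<bar>Y N \<omega>\<bar>) (\<delta>/3)) sequentially"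
    using Y \<open>\<delta> > 0\<close> unfolding bounded_in_prob_def by (meson divide_pos_pos zero_less_numeral)
  define C' where "C' = max C 1"
  define \<eta> where "\<eta> = min c (\<epsilon> / C')"
  have "C' > 0" "\<eta> > 0"
    using \<open>c > 0\<close> \<open>\<epsilon> > 0\<close> by (auto simp: C'_def \<eta>_def)
  have small: "\<bar>T N \<omega>\<bar> \<le> \<epsilon>" if "\<bar>X N \<omega>\<bar> \<le> \<eta>" "\<bar>Y N \<omega>\<bar> \<le> C"
    and "\<bar>X N \<omega>\<bar> \<le> c \<longrightarrow> \<bar>T N \<omega>\<bar> \<le> \<bar>X N \<omega>\<bar> * \<bar>Y N \<omega>\<bar>" for N \<omega>
  proof -
    have "\<bar>T N \<omega>\<bar> \<le> \<bar>X N \<omega>\<bar> * \<bar>Y N \<omega>\<bar>"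
      using that by (simp add: \<eta>_def)
    also have "\<dots> \<le> (\<epsilon> / C') * C'"
      using that \<open>C' > 0\<close> by (intro mult_mono) (auto simp: \<eta>_def C'_def)
    finally show ?thesis
      using \<open>C' > 0\<close> by simp
  qed
  have null: "outer_prob_less M (\<lambda>\<omega>. \<not> (\<forall>N. \<bar>X N \<omega>\<bar> \<le> c \<longrightarrow> \<bar>T N \<omega>\<bar> \<le> \<bar>X N \<omega>\<bar> * \<bar>Y N \<omega>\<bar>)) (\<delta>/3)"
    using bound \<open>\<delta> > 0\<close> by (intro outer_prob_less_AE) simp_all
  have "eventually (\<lambda>N. outer_prob_less M (\<lambda>\<omega>. \<eta> < \<bar>X N \<omega>\<bar>) (\<delta>/3)) sequentially"
    using X \<open>\<eta> > 0\<close> \<open>\<delta> > 0\<close> unfolding o_p1_eventually by simp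
  with C show "eventually (\<lambda>N. outer_prob_less M (\<lambda>\<omega>. \<epsilon> < \<bar>T N \<omega>\<bar>) \<delta>) sequentially"
  proof eventually_elim
    case (elim N)
    with null have "outer_prob_less M (\<lambda>\<omega>. (\<not> (\<forall>N. \<bar>X N \<omega>\<bar> \<le> c \<longrightarrow> \<bar>T N \<omega>\<bar> \<le> \<bar>X N \<omega>\<bar> * \<bar>Y N \<omega>\<bar>)
        \<or> \<eta> < \<bar>X N \<omega>\<bar>) \<or> C < \<bar>Y N \<omega>\<bar>) (\<delta>/3 + \<delta>/3 + \<delta>/3)"
      by (intro outer_prob_less_disj)
    then show ?case
    proof (rule outer_prob_less_mono)
      fix \<omega> assume "\<epsilon> < \<bar>T N \<omega>\<bar>"
      then show "(\<not> (\<forall>N. \<bar>X N \<omega>\<bar> \<le> c \<longrightarrow> \<bar>T N \<omega>\<bar> \<le> \<bar>X N \<omega>\<bar> * \<bar>Y N \<omega>\<bar>)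
          \<or> \<eta> < \<bar>X N \<omega>\<bar>) \<or> C < \<bar>Y N \<omega>\<bar>"
        using small[of N \<omega>] by (auto simp: not_less) (meson not_le)
    qed simp
  qed
qed

section \<open>I.i.d. samples\<close>

definition clip :: "real \<Rightarrow> real \<Rightarrow> real" where
  "clip c x = max (- c) (min c x)"

lemma clip_measurable[measurable]: "clip c \<in> borel_measurable borel"
  unfolding clip_def by measurable

lemma abs_clip_le: "c \<ge> 0 \<Longrightarrow> \<bar>clip c x\<bar> \<le> c"
  unfolding clip_def by auto

lemma abs_diff_clip_le: "c \<ge> 0 \<Longrightarrow> \<bar>x - clip c x\<bar> \<le> \<bar>x\<bar>"
  unfolding clip_def by auto

lemma clip_eq: "\<bar>x\<bar> \<le> c \<Longrightarrow> clip c x = x"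
  unfolding clip_def by auto

lemma integral_abs_diff_clip_small:
  fixes f :: "'a \<Rightarrow> real"
  assumes f: "integrable M f" and "e > 0"
  shows "\<exists>c>0. (\<integral>\<omega>. \<bar>f \<omega> - clip c (f \<omega>)\<bar> \<partial>M) < e"
proof -
  have [measurable]: "f \<in> borel_measurable M"
    using f by simp
  have "(\<lambda>n. \<integral>\<omega>. \<bar>f \<omega> - clip (real n) (f \<omega>)\<bar> \<partial>M) \<longlonglongrightarrow> (\<integral>\<omega>. 0 \<partial>M)"
  proof (rule integral_dominated_convergence[where w="\<lambda>\<omega>. \<bar>f \<omega>\<bar>"])
    show "AE \<omega> in M. (\<lambda>n. \<bar>f \<omega> - clip (real n) (f \<omega>)\<bar>) \<longlonglongrightarrow> 0"
    proof (rule AE_I2)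
      fix \<omega>
      obtain n0 :: nat where "\<bar>f \<omega>\<bar> \<le> real n0"
        using real_arch_simple by blast
      then have "eventually (\<lambda>n. \<bar>f \<omega> - clip (real n) (f \<omega>)\<bar> = 0) sequentially"
        unfolding eventually_sequentially by (intro exI[of _ n0]) (auto simp: clip_eq)
      then show "(\<lambda>n. \<bar>f \<omega> - clip (real n) (f \<omega>)\<bar>) \<longlonglongrightarrow> 0"
        by (rule tendsto_eventually)
    qed
  qed (use f in \<open>auto intro!: AE_I2 simp: abs_diff_clip_le\<close>)
  then have "eventually (\<lambda>n. (\<integral>\<omega>. \<bar>f \<omega> - clip (real n) (f \<omega>)\<bar> \<partial>M) < e) sequentially"
    using \<open>e > 0\<close> by (intro order_tendstoD) auto
  then obtain n where "n \<ge> 1" "(\<integral>\<omega>. \<bar>f \<omega> - clip (real n) (f \<omega>)\<bar> \<partial>M) < e"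
    unfolding eventually_sequentially by (metis le_add2 nle_le)
  then show ?thesis
    by (intro exI[of _ "real n"]) auto
qed

lemma abs_mean_diff_le:
  fixes f g :: "nat \<Rightarrow> real"
  shows "\<bar>(\<Sum>i<N. f i) / real N - a\<bar>
           \<le> \<bar>(\<Sum>i<N. g i) / real N - b\<bar> + (\<Sum>i<N. \<bar>f i - g i\<bar>) / real N + \<bar>a - b\<bar>"
proof -
  have "\<bar>(\<Sum>i<N. f i - g i) / real N\<bar> \<le> (\<Sum>i<N. \<bar>f i - g i\<bar>) / real N"
    using sum_abs[of "\<lambda>i. f i - g i" "{..<N}"] by (simp add: abs_divide divide_right_mono)
  moreover have "(\<Sum>i<N. f i) / real N - a = ((\<Sum>i<N. g i) / real N - b) + (\<Sum>i<N. f i - g i) / real N - (a - b)"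
    by (simp add: sum_subtractf diff_divide_distrib)
  ultimately show ?thesis
    by linarith
qed

locale iid_sample = prob_space +
  fixes S :: "'b measure" and D :: "nat \<Rightarrow> 'a \<Rightarrow> 'b"
  assumes random_variable_D[measurable]: "\<And>i. random_variable S (D i)"
    and indep_vars_D: "indep_vars (\<lambda>_. S) D UNIV"
    and distr_D: "\<And>i. distr M S (D i) = distr M S (D 0)"
begin

lemma integral_D_eq:
  fixes f :: "'b \<Rightarrow> real"
  assumes [measurable]: "f \<in> borel_measurable S"
  shows "(\<integral>\<omega>. f (D i \<omega>) \<partial>M) = (\<integral>\<omega>. f (D 0 \<omega>) \<partial>M)"
  using integral_distr[of "D i" M S f] integral_distr[of "D 0" M S f] by (simp add: distr_D[of i])

lemma integrable_D_iff:
  fixes f :: "'b \<Rightarrow> real"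
  assumes [measurable]: "f \<in> borel_measurable S"
  shows "integrable M (\<lambda>\<omega>. f (D i \<omega>)) \<longleftrightarrow> integrable M (\<lambda>\<omega>. f (D 0 \<omega>))"
  using integrable_distr_eq[of "D i" M S f] integrable_distr_eq[of "D 0" M S f]
  by (simp add: distr_D[of i])

lemma AE_D:
  assumes [measurable]: "Measurable.pred S P" and "AE \<omega> in M. P (D 0 \<omega>)"
  shows "AE \<omega> in M. P (D i \<omega>)"
proof -
  have "AE x in distr M S (D 0). P x"
    using assms AE_distr_iff[of "D 0" M S P] by simp
  then have "AE x in distr M S (D i). P x"
    by (simp only: distr_D[of i])
  then show ?thesis
    using AE_distr_iff[of "D i" M S P] by simp
qed

lemma indep_var_D:
  fixes f g :: "'b \<Rightarrow> real"
  assumes "i \<noteq> j" and [measurable]: "f \<in> borel_measurable S" "g \<in> borel_measurable S"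
  shows "indep_var borel (\<lambda>\<omega>. f (D i \<omega>)) borel (\<lambda>\<omega>. g (D j \<omega>))"
proof -
  have "indep_var (PiM {i} (\<lambda>_. S)) (\<lambda>\<omega>. restrict (\<lambda>k. D k \<omega>) {i})
                  (PiM {j} (\<lambda>_. S)) (\<lambda>\<omega>. restrict (\<lambda>k. D k \<omega>) {j})"
    using \<open>i \<noteq> j\<close> by (intro indep_var_restrict[OF indep_vars_D]) auto
  then have "indep_var borel ((\<lambda>x. f (x i)) \<circ> (\<lambda>\<omega>. restrict (\<lambda>k. D k \<omega>) {i}))
                       borel ((\<lambda>x. g (x j)) \<circ> (\<lambda>\<omega>. restrict (\<lambda>k. D k \<omega>) {j}))"
    by (rule indep_var_compose) auto
  then show ?thesis
    by (simp add: comp_def)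
qed

lemma expectation_sum_D_sq:
  fixes f :: "'b \<Rightarrow> real"
  assumes [measurable]: "f \<in> borel_measurable S"
    and sq: "sq_integrable M (\<lambda>\<omega>. f (D 0 \<omega>))" and mean: "expectation (\<lambda>\<omega>. f (D 0 \<omega>)) = 0"
  shows "expectation (\<lambda>\<omega>. (\<Sum>i<N. f (D i \<omega>))\<^sup>2) = real N * expectation (\<lambda>\<omega>. (f (D 0 \<omega>))\<^sup>2)"
proof -
  have L2: "sq_integrable M (\<lambda>\<omega>. f (D i \<omega>))" for i
    using sq integrable_D_iff[of "\<lambda>x. (f x)\<^sup>2" i] by (simp add: sq_integrable_def)
  have cross: "expectation (\<lambda>\<omega>. f (D i \<omega>) * f (D j \<omega>))
      = (if i = j then expectation (\<lambda>\<omega>. (f (D 0 \<omega>))\<^sup>2) else 0)" for i j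
  proof (cases "i = j")
    case True
    then show ?thesis
      using integral_D_eq[of "\<lambda>x. (f x)\<^sup>2" i] by (simp add: power2_eq_square)
  next
    case False
    have "expectation (\<lambda>\<omega>. f (D i \<omega>) * f (D j \<omega>))
        = expectation (\<lambda>\<omega>. f (D i \<omega>)) * expectation (\<lambda>\<omega>. f (D j \<omega>))"
      by (rule indep_var_lebesgue_integral[OF indep_var_D[OF False]])
        (simp_all add: sq_integrable_integrable[OF L2])
    also have "\<dots> = 0"
      using mean integral_D_eq[of f i] by simp
    finally show ?thesis
      using False by simp
  qed
  have "(\<lambda>\<omega>. (\<Sum>i<N. f (D i \<omega>))\<^sup>2) = (\<lambda>\<omega>. \<Sum>i<N. \<Sum>j<N. f (D i \<omega>) * f (D j \<omega>))"
    by (simp add: power2_eq_square sum_product)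
  then have "expectation (\<lambda>\<omega>. (\<Sum>i<N. f (D i \<omega>))\<^sup>2)
      = (\<Sum>i<N. \<Sum>j<N. expectation (\<lambda>\<omega>. f (D i \<omega>) * f (D j \<omega>)))"
    by (simp add: Bochner_Integration.integral_sum integrable_mult_sq_integrable[OF L2 L2])
  also have "\<dots> = real N * expectation (\<lambda>\<omega>. (f (D 0 \<omega>))\<^sup>2)"
    by (simp add: cross)
  finally show ?thesis .
qed

lemma prob_abs_sum_D_ge:
  fixes f :: "'b \<Rightarrow> real"
  assumes [measurable]: "f \<in> borel_measurable S"
    and sq: "sq_integrable M (\<lambda>\<omega>. f (D 0 \<omega>))" and mean: "expectation (\<lambda>\<omega>. f (D 0 \<omega>)) = 0"
    and "a > 0"
  shows "prob {\<omega>\<in>space M. a \<le> \<bar>\<Sum>i<N. f (D i \<omega>)\<bar>} \<le> real N * expectation (\<lambda>\<omega>. (f (D 0 \<omega>))\<^sup>2) / a\<^sup>2"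
proof -
  have L2: "sq_integrable M (\<lambda>\<omega>. f (D i \<omega>))" for i
    using sq integrable_D_iff[of "\<lambda>x. (f x)\<^sup>2" i] by (simp add: sq_integrable_def)
  have sum_L2: "integrable M (\<lambda>\<omega>. (\<Sum>i<N. f (D i \<omega>))\<^sup>2)"
    using sq_integrable_sum[of "{..<N}" M "\<lambda>i \<omega>. f (D i \<omega>)"] L2 by (simp add: sq_integrable_def)
  have "expectation (\<lambda>\<omega>. f (D i \<omega>)) = 0" for i
    using mean integral_D_eq[of f i] by simp
  then have mean_sum: "expectation (\<lambda>\<omega>. \<Sum>i<N. f (D i \<omega>)) = 0"
    by (simp add: Bochner_Integration.integral_sum sq_integrable_integrable[OF L2])
  have "prob {\<omega>\<in>space M. a \<le> \<bar>(\<Sum>i<N. f (D i \<omega>)) - 0\<bar>} \<le> variance (\<lambda>\<omega>. \<Sum>i<N. f (D i \<omega>)) / a\<^sup>2"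
    using Chebyshev_inequality[of "\<lambda>\<omega>. \<Sum>i<N. f (D i \<omega>)" a] sum_L2 \<open>a > 0\<close>
    unfolding mean_sum by simp
  then show ?thesis
    using expectation_sum_D_sq[OF _ sq mean] mean_sum by simp
qed

lemma bounded_in_prob_scaled_sum_D:
  fixes f :: "'b \<Rightarrow> real"
  assumes [measurable]: "f \<in> borel_measurable S"
    and sq: "sq_integrable M (\<lambda>\<omega>. f (D 0 \<omega>))" and mean: "expectation (\<lambda>\<omega>. f (D 0 \<omega>)) = 0"
  shows "bounded_in_prob M (\<lambda>N \<omega>. (1 / sqrt (real N)) * (\<Sum>i<N. f (D i \<omega>)))"
  unfolding bounded_in_prob_def
proof (intro allI impI)
  fix \<delta> :: real assume "\<delta> > 0"
  define \<sigma>2 where "\<sigma>2 = expectation (\<lambda>\<omega>. (f (D 0 \<omega>))\<^sup>2)"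
  define C where "C = sqrt (\<sigma>2 / \<delta>) + 1"
  have "\<sigma>2 \<ge> 0"
    unfolding \<sigma>2_def by simp
  then have "\<sigma>2 / \<delta> \<ge> 0"
    using \<open>\<delta> > 0\<close> by simp
  then have "C > 0"
    unfolding C_def by (simp add: add_nonneg_pos)
  have "\<sigma>2 / \<delta> = (sqrt (\<sigma>2 / \<delta>))\<^sup>2"
    using \<open>\<sigma>2 / \<delta> \<ge> 0\<close> by simp
  also have "\<dots> < C\<^sup>2"
    unfolding C_def using \<open>\<sigma>2 / \<delta> \<ge> 0\<close> by (intro power_strict_mono) auto
  finally have "\<sigma>2 / C\<^sup>2 < \<delta>"
    using \<open>\<delta> > 0\<close> \<open>C > 0\<close> by (simp add: field_simps)
  have "outer_prob_less M (\<lambda>\<omega>. C < \<bar>(1 / sqrt (real N)) * (\<Sum>i<N. f (D i \<omega>))\<bar>) \<delta>" for N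
  proof (cases "N = 0")
    case True
    then show ?thesis
      using \<open>C > 0\<close> \<open>\<delta> > 0\<close> by (intro outer_prob_less_measurable) auto
  next
    case False
    have "prob {\<omega>\<in>space M. C * sqrt (real N) \<le> \<bar>\<Sum>i<N. f (D i \<omega>)\<bar>} \<le> real N * \<sigma>2 / (C * sqrt (real N))\<^sup>2"
      unfolding \<sigma>2_def using False \<open>C > 0\<close> by (intro prob_abs_sum_D_ge sq mean) auto
    also have "\<dots> = \<sigma>2 / C\<^sup>2"
      using False by (simp add: power_mult_distrib)
    finally have "prob {\<omega>\<in>space M. C * sqrt (real N) \<le> \<bar>\<Sum>i<N. f (D i \<omega>)\<bar>} < \<delta>"
      using \<open>\<sigma>2 / C\<^sup>2 < \<delta>\<close> by linarith
    then have "outer_prob_less M (\<lambda>\<omega>. C * sqrt (real N) \<le> \<bar>\<Sum>i<N. f (D i \<omega>)\<bar>) \<delta>"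
      by (intro outer_prob_less_measurable) auto
    moreover have "C * sqrt (real N) \<le> \<bar>\<Sum>i<N. f (D i \<omega>)\<bar>"
      if "C < \<bar>(1 / sqrt (real N)) * (\<Sum>i<N. f (D i \<omega>))\<bar>" for \<omega>
      using that False by (simp add: abs_mult pos_less_divide_eq)
    ultimately show ?thesis
      by (rule outer_prob_less_mono) auto
  qed
  then show "\<exists>C. eventually (\<lambda>N. outer_prob_less M (\<lambda>\<omega>. C < \<bar>(1 / sqrt (real N)) * (\<Sum>i<N. f (D i \<omega>))\<bar>) \<delta>) sequentially"
    by (intro exI[of _ C] always_eventually allI)
qed

lemma o_p1_sample_mean_sq_integrable:
  fixes f :: "'b \<Rightarrow> real"
  assumes [measurable]: "f \<in> borel_measurable S" and sq: "sq_integrable M (\<lambda>\<omega>. f (D 0 \<omega>))"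
  shows "o_p1 M (\<lambda>N \<omega>. (\<Sum>i<N. f (D i \<omega>)) / real N - expectation (\<lambda>\<omega>. f (D 0 \<omega>)))"
  unfolding o_p1_eventually
proof (intro allI impI)
  fix \<epsilon> \<delta> :: real assume "\<epsilon> > 0" "\<delta> > 0"
  define \<mu> where "\<mu> = expectation (\<lambda>\<omega>. f (D 0 \<omega>))"
  define \<sigma>2 where "\<sigma>2 = expectation (\<lambda>\<omega>. (f (D 0 \<omega>) - \<mu>)\<^sup>2)"
  have L2: "sq_integrable M (\<lambda>\<omega>. f (D 0 \<omega>) - \<mu>)"
    using sq by (intro sq_integrable_diff sq_integrable_const)
  have "integrable M (\<lambda>\<omega>. f (D 0 \<omega>))"
    using sq by (rule sq_integrable_integrable)
  then have mean: "expectation (\<lambda>\<omega>. f (D 0 \<omega>) - \<mu>) = 0"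
    by (simp add: \<mu>_def prob_space)
  obtain n0 :: nat where n0: "\<sigma>2 / (\<epsilon>\<^sup>2 * \<delta>) < real n0"
    using reals_Archimedean2 by blast
  have "outer_prob_less M (\<lambda>\<omega>. \<epsilon> < \<bar>(\<Sum>i<N. f (D i \<omega>)) / real N - \<mu>\<bar>) \<delta>"
    if "N \<ge> max n0 1" for N
  proof -
    have N: "N > 0" "\<sigma>2 / (\<epsilon>\<^sup>2 * \<delta>) < real N"
      using that n0 by auto
    have "prob {\<omega>\<in>space M. real N * \<epsilon> \<le> \<bar>\<Sum>i<N. f (D i \<omega>) - \<mu>\<bar>} \<le> real N * \<sigma>2 / (real N * \<epsilon>)\<^sup>2"
      unfolding \<sigma>2_def using L2 mean N \<open>\<epsilon> > 0\<close>
      by (intro prob_abs_sum_D_ge[where f="\<lambda>x. f x - \<mu>"]) auto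
    also have "\<dots> = \<sigma>2 / (\<epsilon>\<^sup>2 * real N)"
      using N by (simp add: power2_eq_square)
    also have "\<dots> < \<delta>"
      using N \<open>\<epsilon> > 0\<close> \<open>\<delta> > 0\<close> by (simp add: field_simps)
    finally have "outer_prob_less M (\<lambda>\<omega>. real N * \<epsilon> \<le> \<bar>\<Sum>i<N. f (D i \<omega>) - \<mu>\<bar>) \<delta>"
      by (intro outer_prob_less_measurable) auto
    moreover have "(\<Sum>i<N. f (D i \<omega>)) / real N - \<mu> = (\<Sum>i<N. f (D i \<omega>) - \<mu>) / real N" for \<omega>
      using N by (simp add: sum_subtractf field_simps)
    ultimately show ?thesis
      using N by (elim outer_prob_less_mono) (auto simp: pos_less_divide_eq abs_divide mult.commute)
  qed
  then show "eventually (\<lambda>N. outer_prob_less M (\<lambda>\<omega>. \<epsilon> < \<bar>(\<Sum>i<N. f (D i \<omega>)) / real N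
      - expectation (\<lambda>\<omega>. f (D 0 \<omega>))\<bar>) \<delta>) sequentially"
    unfolding \<mu>_def eventually_sequentially by blast
qed

lemma eventually_outer_prob_mean_abs_D:
  fixes h :: "'b \<Rightarrow> real"
  assumes [measurable]: "h \<in> borel_measurable S" and int: "integrable M (\<lambda>\<omega>. h (D 0 \<omega>))"
    and "a > 0" and small: "expectation (\<lambda>\<omega>. \<bar>h (D 0 \<omega>)\<bar>) < a * \<delta>"
  shows "eventually (\<lambda>N. outer_prob_less M (\<lambda>\<omega>. a \<le> (\<Sum>i<N. \<bar>h (D i \<omega>)\<bar>) / real N) \<delta>) sequentially"
  using eventually_gt_at_top[of 0]
proof eventually_elim
  case (elim N)
  have int_i: "integrable M (\<lambda>\<omega>. \<bar>h (D i \<omega>)\<bar>)" for i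
    using int integrable_D_iff[of h i] by simp
  have "(\<Sum>i<N. expectation (\<lambda>\<omega>. \<bar>h (D i \<omega>)\<bar>)) = (\<Sum>i<N. expectation (\<lambda>\<omega>. \<bar>h (D 0 \<omega>)\<bar>))"
    by (rule sum.cong[OF refl], rule integral_D_eq) simp
  then have "expectation (\<lambda>\<omega>. (\<Sum>i<N. \<bar>h (D i \<omega>)\<bar>) / real N) = expectation (\<lambda>\<omega>. \<bar>h (D 0 \<omega>)\<bar>)"
    using elim int_i by (simp add: Bochner_Integration.integral_sum)
  moreover have "prob {\<omega>\<in>space M. a \<le> (\<Sum>i<N. \<bar>h (D i \<omega>)\<bar>) / real N}
      \<le> expectation (\<lambda>\<omega>. (\<Sum>i<N. \<bar>h (D i \<omega>)\<bar>) / real N) / a"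
    by (rule integral_Markov_inequality_measure[where A="space M"]) (use int_i \<open>a > 0\<close> in auto)
  ultimately have "prob {\<omega>\<in>space M. a \<le> (\<Sum>i<N. \<bar>h (D i \<omega>)\<bar>) / real N}
      \<le> expectation (\<lambda>\<omega>. \<bar>h (D 0 \<omega>)\<bar>) / a"
    by simp
  also have "\<dots> < \<delta>"
    using small \<open>a > 0\<close> by (simp add: field_simps)
  finally show ?case
    by (intro outer_prob_less_measurable) auto
qed

text \<open>Weak law of large numbers, by truncation: the truncated variables have finite variance,
  and the remainder is small in mean.\<close>

lemma o_p1_sample_mean:
  fixes f :: "'b \<Rightarrow> real"
  assumes [measurable]: "f \<in> borel_measurable S" and int: "integrable M (\<lambda>\<omega>. f (D 0 \<omega>))"
  shows "o_p1 M (\<lambda>N \<omega>. (\<Sum>i<N. f (D i \<omega>)) / real N - expectation (\<lambda>\<omega>. f (D 0 \<omega>)))"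
  unfolding o_p1_eventually
proof (intro allI impI)
  fix \<epsilon> \<delta> :: real assume "\<epsilon> > 0" "\<delta> > 0"
  define e where "e = \<epsilon> * min \<delta> 1 / 6"
  have "e > 0" "e \<le> \<epsilon> / 3 * (\<delta> / 2)" "e \<le> \<epsilon> / 6"
    using \<open>\<epsilon> > 0\<close> \<open>\<delta> > 0\<close> by (auto simp: e_def min_def)
  obtain c where "c > 0" and c: "expectation (\<lambda>\<omega>. \<bar>f (D 0 \<omega>) - clip c (f (D 0 \<omega>))\<bar>) < e"
    using integral_abs_diff_clip_small[OF int \<open>e > 0\<close>] by blast
  define g where "g x = clip c (f x)" for x
  have [measurable]: "g \<in> borel_measurable S"
    unfolding g_def by measurable
  have "integrable M (\<lambda>\<omega>. (g (D 0 \<omega>))\<^sup>2)"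
    using \<open>c > 0\<close> abs_clip_le[of c]
    by (intro integrable_const_bound[where B="c\<^sup>2"] AE_I2) (auto simp: g_def abs_le_square_iff[symmetric])
  then have g_sq: "sq_integrable M (\<lambda>\<omega>. g (D 0 \<omega>))"
    by (simp add: sq_integrable_def)
  then have g_int: "integrable M (\<lambda>\<omega>. g (D 0 \<omega>))"
    by (rule sq_integrable_integrable)
  have c_g: "expectation (\<lambda>\<omega>. \<bar>f (D 0 \<omega>) - g (D 0 \<omega>)\<bar>) < e"
    using c by (simp add: g_def)
  have "\<bar>expectation (\<lambda>\<omega>. f (D 0 \<omega>) - g (D 0 \<omega>))\<bar> \<le> expectation (\<lambda>\<omega>. \<bar>f (D 0 \<omega>) - g (D 0 \<omega>)\<bar>)"
    by (rule integral_abs_bound)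
  moreover have "expectation (\<lambda>\<omega>. f (D 0 \<omega>) - g (D 0 \<omega>))
      = expectation (\<lambda>\<omega>. f (D 0 \<omega>)) - expectation (\<lambda>\<omega>. g (D 0 \<omega>))"
    using g_int int by simp
  ultimately have Efg: "\<bar>expectation (\<lambda>\<omega>. f (D 0 \<omega>)) - expectation (\<lambda>\<omega>. g (D 0 \<omega>))\<bar> < \<epsilon> / 3"
    using c_g \<open>e \<le> \<epsilon> / 6\<close> \<open>\<epsilon> > 0\<close> by linarith
  have "eventually (\<lambda>N. outer_prob_less M (\<lambda>\<omega>. \<epsilon>/3 < \<bar>(\<Sum>i<N. g (D i \<omega>)) / real N
      - expectation (\<lambda>\<omega>. g (D 0 \<omega>))\<bar>) (\<delta>/2)) sequentially"
    using o_p1_sample_mean_sq_integrable[OF _ g_sq, unfolded o_p1_eventually, rule_format,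
        of "\<epsilon>/3" "\<delta>/2"] \<open>\<epsilon> > 0\<close> \<open>\<delta> > 0\<close>
    by simp
  moreover have "eventually (\<lambda>N. outer_prob_less M
      (\<lambda>\<omega>. \<epsilon>/3 \<le> (\<Sum>i<N. \<bar>f (D i \<omega>) - g (D i \<omega>)\<bar>) / real N) (\<delta>/2)) sequentially"
    using \<open>\<epsilon> > 0\<close> c_g \<open>e \<le> \<epsilon> / 3 * (\<delta> / 2)\<close> g_int int
    by (intro eventually_outer_prob_mean_abs_D[where h="\<lambda>x. f x - g x"]) auto
  ultimately show "eventually (\<lambda>N. outer_prob_less M (\<lambda>\<omega>. \<epsilon> < \<bar>(\<Sum>i<N. f (D i \<omega>)) / real N
      - expectation (\<lambda>\<omega>. f (D 0 \<omega>))\<bar>) \<delta>) sequentially"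
  proof eventually_elim
    case (elim N)
    then have "outer_prob_less M (\<lambda>\<omega>. \<epsilon>/3 < \<bar>(\<Sum>i<N. g (D i \<omega>)) / real N - expectation (\<lambda>\<omega>. g (D 0 \<omega>))\<bar>
        \<or> \<epsilon>/3 \<le> (\<Sum>i<N. \<bar>f (D i \<omega>) - g (D i \<omega>)\<bar>) / real N) (\<delta>/2 + \<delta>/2)"
      by (intro outer_prob_less_disj)
    then show ?case
    proof (rule outer_prob_less_mono)
      fix \<omega> assume "\<epsilon> < \<bar>(\<Sum>i<N. f (D i \<omega>)) / real N - expectation (\<lambda>\<omega>. f (D 0 \<omega>))\<bar>"
      then show "\<epsilon>/3 < \<bar>(\<Sum>i<N. g (D i \<omega>)) / real N - expectation (\<lambda>\<omega>. g (D 0 \<omega>))\<bar>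
          \<or> \<epsilon>/3 \<le> (\<Sum>i<N. \<bar>f (D i \<omega>) - g (D i \<omega>)\<bar>) / real N"
        using abs_mean_diff_le[where N=N and f="\<lambda>i. f (D i \<omega>)" and a="expectation (\<lambda>\<omega>. f (D 0 \<omega>))"
            and g="\<lambda>i. g (D i \<omega>)" and b="expectation (\<lambda>\<omega>. g (D 0 \<omega>))"] Efg
        by linarith
    qed simp
  qed
qed

end

section \<open>Weighted regressions\<close>

lemma normal_equations_matrix_form:
  fixes w U :: "nat \<Rightarrow> real" and Z :: "nat \<Rightarrow> nat \<Rightarrow> real"
  assumes "(\<Sum>i<N. w i * (U i - (\<Sum>l<r. Z i l * \<phi> l)) * Z i k) = 0"
  shows "(\<Sum>l<r. (\<Sum>i<N. w i * Z i k * Z i l) * \<phi> l) = (\<Sum>i<N. w i * U i * Z i k)"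
proof -
  have "(\<Sum>l<r. (\<Sum>i<N. w i * Z i k * Z i l) * \<phi> l) = (\<Sum>i<N. w i * (\<Sum>l<r. Z i l * \<phi> l) * Z i k)"
    by (simp add: sum_distrib_left sum_distrib_right sum.swap[of _ "{..<r}"] mult_ac)
  then show ?thesis
    using assms by (simp add: algebra_simps sum_subtractf)
qed

lemma quadratic_form_lower_bound:
  fixes Mx :: "nat \<Rightarrow> nat \<Rightarrow> real" and \<phi> :: "nat \<Rightarrow> real"
  assumes close: "\<And>k l. k < r \<Longrightarrow> l < r \<Longrightarrow> \<bar>Mx k l - (if k = l then \<rho> else 0)\<bar> \<le> \<eta>"
  shows "(\<Sum>k<r. \<Sum>l<r. \<phi> k * \<phi> l * Mx k l) \<ge> \<rho> * (\<Sum>k<r. (\<phi> k)\<^sup>2) - \<eta> * (\<Sum>k<r. \<bar>\<phi> k\<bar>)\<^sup>2"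
proof -
  have diag: "(\<Sum>k<r. \<Sum>l<r. \<phi> k * \<phi> l * (if k = l then \<rho> else 0)) = \<rho> * (\<Sum>k<r. (\<phi> k)\<^sup>2)"
    by (simp add: sum_distrib_left power2_eq_square mult_ac if_distrib cong: if_cong)
  have "\<bar>\<Sum>k<r. \<Sum>l<r. \<phi> k * \<phi> l * (Mx k l - (if k = l then \<rho> else 0))\<bar>
      \<le> (\<Sum>k<r. \<Sum>l<r. \<bar>\<phi> k * \<phi> l * (Mx k l - (if k = l then \<rho> else 0))\<bar>)"
    by (rule order_trans[OF sum_abs]) (intro sum_mono sum_abs)
  also have "\<dots> \<le> (\<Sum>k<r. \<Sum>l<r. \<bar>\<phi> k\<bar> * \<bar>\<phi> l\<bar> * \<eta>)"
    using close unfolding abs_mult by (intro sum_mono mult_left_mono) auto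
  also have "\<dots> = \<eta> * (\<Sum>k<r. \<bar>\<phi> k\<bar>)\<^sup>2"
    by (simp add: power2_eq_square sum_product sum_distrib_left mult_ac)
  finally have "\<bar>\<Sum>k<r. \<Sum>l<r. \<phi> k * \<phi> l * (Mx k l - (if k = l then \<rho> else 0))\<bar>
      \<le> \<eta> * (\<Sum>k<r. \<bar>\<phi> k\<bar>)\<^sup>2" .
  moreover have "(\<Sum>k<r. \<Sum>l<r. \<phi> k * \<phi> l * Mx k l)
      = \<rho> * (\<Sum>k<r. (\<phi> k)\<^sup>2) + (\<Sum>k<r. \<Sum>l<r. \<phi> k * \<phi> l * (Mx k l - (if k = l then \<rho> else 0)))"
    unfolding diag[symmetric] by (simp add: sum.distrib[symmetric] algebra_simps)
  ultimately show ?thesis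
    by linarith
qed

lemma near_scalar_system_quadratic_bound:
  fixes Mx :: "nat \<Rightarrow> nat \<Rightarrow> real" and c \<phi> :: "nat \<Rightarrow> real"
  assumes eq: "\<And>k. k < r \<Longrightarrow> (\<Sum>l<r. Mx k l * \<phi> l) = c k"
    and close: "\<And>k l. k < r \<Longrightarrow> l < r \<Longrightarrow> \<bar>Mx k l - (if k = l then \<rho> else 0)\<bar> \<le> \<eta>"
    and small: "\<And>k. k < r \<Longrightarrow> \<bar>c k\<bar> \<le> \<eta>"
  shows "\<rho> * (\<Sum>k<r. (\<phi> k)\<^sup>2) \<le> \<eta> * (\<Sum>k<r. \<bar>\<phi> k\<bar>)\<^sup>2 + \<eta> * (\<Sum>k<r. \<bar>\<phi> k\<bar>)"
proof -
  have "(\<Sum>k<r. \<Sum>l<r. \<phi> k * \<phi> l * Mx k l) = (\<Sum>k<r. \<phi> k * (\<Sum>l<r. Mx k l * \<phi> l))"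
    by (simp add: sum_distrib_left mult_ac)
  also have "\<dots> = (\<Sum>k<r. \<phi> k * c k)"
    using eq by simp
  also have "\<dots> \<le> (\<Sum>k<r. \<bar>\<phi> k\<bar> * \<eta>)"
  proof (rule sum_mono)
    fix k assume "k \<in> {..<r}"
    have "\<phi> k * c k \<le> \<bar>\<phi> k\<bar> * \<bar>c k\<bar>"
      by (simp flip: abs_mult)
    also have "\<dots> \<le> \<bar>\<phi> k\<bar> * \<eta>"
      using small \<open>k \<in> {..<r}\<close> by (intro mult_left_mono) auto
    finally show "\<phi> k * c k \<le> \<bar>\<phi> k\<bar> * \<eta>" .
  qed
  also have "\<dots> = \<eta> * (\<Sum>k<r. \<bar>\<phi> k\<bar>)"
    by (simp add: sum_distrib_left mult.commute)
  finally show ?thesis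
    using quadratic_form_lower_bound[of r Mx \<rho> \<eta> \<phi>, OF close] by linarith
qed

text \<open>The quadratic bound and Cauchy-Schwarz give \<open>(\<rho>/r - \<eta>) s\<^sup>2 \<le> \<eta> s\<close> for \<open>s = \<Sum>\<^sub>k \<bar>\<phi> k\<bar>\<close>.\<close>

lemma near_scalar_system_l1_bound:
  fixes Mx :: "nat \<Rightarrow> nat \<Rightarrow> real" and c \<phi> :: "nat \<Rightarrow> real"
  assumes eq: "\<And>k. k < r \<Longrightarrow> (\<Sum>l<r. Mx k l * \<phi> l) = c k"
    and close: "\<And>k l. k < r \<Longrightarrow> l < r \<Longrightarrow> \<bar>Mx k l - (if k = l then \<rho> else 0)\<bar> \<le> \<eta>"
    and small: "\<And>k. k < r \<Longrightarrow> \<bar>c k\<bar> \<le> \<eta>"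
    and "\<rho> > 0" "\<eta> * real r \<le> \<rho> / 2"
  shows "(\<Sum>k<r. \<bar>\<phi> k\<bar>) \<le> 2 * real r * \<eta> / \<rho>"
proof (cases "r = 0")
  case False
  define s1 where "s1 = (\<Sum>k<r. \<bar>\<phi> k\<bar>)"
  define s2 where "s2 = (\<Sum>k<r. (\<phi> k)\<^sup>2)"
  have "s1 \<ge> 0" "\<eta> \<ge> 0"
    using small[of 0] False unfolding s1_def by (auto intro: sum_nonneg)
  have "s1\<^sup>2 \<le> real r * s2"
    using sum_squared_le_sum_of_squares[of "\<lambda>k. \<bar>\<phi> k\<bar>" "{..<r}"] unfolding s1_def s2_def
    by (simp add: mult.commute)
  then have "\<rho> * s1\<^sup>2 \<le> real r * (\<rho> * s2)"
    using \<open>\<rho> > 0\<close> mult_left_mono[of "s1\<^sup>2" "real r * s2" \<rho>] by (simp add: mult_ac)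
  also have "\<dots> \<le> real r * (\<eta> * s1\<^sup>2 + \<eta> * s1)"
    using near_scalar_system_quadratic_bound[OF eq close small] unfolding s1_def s2_def
    by (intro mult_left_mono) auto
  also have "\<dots> \<le> \<rho> / 2 * s1\<^sup>2 + real r * \<eta> * s1"
    using mult_right_mono[OF \<open>\<eta> * real r \<le> \<rho> / 2\<close>, of "s1\<^sup>2"] by (simp add: algebra_simps)
  finally have "s1 * (\<rho> * s1) \<le> s1 * (2 * real r * \<eta>)"
    by (simp add: power2_eq_square algebra_simps)
  then have "s1 = 0 \<or> \<rho> * s1 \<le> 2 * real r * \<eta>"
    using \<open>s1 \<ge> 0\<close> by (auto simp: mult_le_cancel_left)
  then show ?thesis
    using \<open>\<rho> > 0\<close> \<open>\<eta> \<ge> 0\<close> unfolding s1_def by (auto simp: pos_le_divide_eq mult.commute)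
qed simp

lemma intercept_elimination:
  fixes \<phi> B D :: "nat \<Rightarrow> real"
  assumes "r > 0" and A: "A = (\<Sum>k<r. \<phi> k * B k)" and B0: "B 0 = s * p" and D0: "D 0 = s" and "p \<noteq> 0"
  shows "(\<Sum>k<r. \<phi> k * D k) - A / \<rho> = A * (1 / p - 1 / \<rho>) + (\<Sum>k\<in>{1..<r}. \<phi> k * (D k - B k / p))"
proof -
  have split: "(\<Sum>k<r. f k) = f 0 + (\<Sum>k\<in>{1..<r}. f k)" for f :: "nat \<Rightarrow> real"
    using sum.atLeast_Suc_lessThan[OF \<open>r > 0\<close>, of f] by (simp add: atLeast0LessThan)
  have "\<phi> 0 * s = (A - (\<Sum>k\<in>{1..<r}. \<phi> k * B k)) / p"
    using A B0 \<open>p \<noteq> 0\<close> split[of "\<lambda>k. \<phi> k * B k"] by (simp add: field_simps)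
  then show ?thesis
    using D0 split[of "\<lambda>k. \<phi> k * D k"]
    by (simp add: right_diff_distrib sum_subtractf sum_divide_distrib diff_divide_distrib)
qed

lemma intercept_elimination_bound:
  fixes \<phi> B D :: "nat \<Rightarrow> real"
  assumes "r > 0" and A: "A = (\<Sum>k<r. \<phi> k * B k)" and B0: "B 0 = s * p" and D0: "D 0 = s"
    and p: "\<bar>p - \<rho>\<bar> \<le> \<eta>" and "\<eta> \<le> \<rho> / 2" and "\<rho> > 0"
    and AC: "\<bar>A\<bar> \<le> C" and BC: "\<And>k. k \<in> {1..<r} \<Longrightarrow> \<bar>B k\<bar> \<le> C"
    and DC: "\<And>k. k \<in> {1..<r} \<Longrightarrow> \<bar>D k\<bar> \<le> C"
    and L: "(\<Sum>k<r. \<bar>\<phi> k\<bar>) \<le> L"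
  shows "\<bar>(\<Sum>k<r. \<phi> k * D k) - A / \<rho>\<bar> \<le> C * (2 * \<eta> / \<rho>\<^sup>2) + L * (C + 2 * C / \<rho>)"
proof -
  have "p \<ge> \<rho> / 2" "p > 0" "C \<ge> 0"
    using p AC \<open>\<eta> \<le> \<rho> / 2\<close> \<open>\<rho> > 0\<close> by auto
  have "\<bar>1 / p - 1 / \<rho>\<bar> = \<bar>\<rho> - p\<bar> / (p * \<rho>)"
    using \<open>p > 0\<close> \<open>\<rho> > 0\<close> by (simp add: field_simps abs_divide)
  also have "\<dots> \<le> \<eta> / (\<rho> / 2 * \<rho>)"
    using p \<open>p \<ge> \<rho> / 2\<close> \<open>\<rho> > 0\<close> by (intro frac_le mult_right_mono) (auto simp: abs_minus_commute)
  finally have "\<bar>A * (1 / p - 1 / \<rho>)\<bar> \<le> C * (2 * \<eta> / \<rho>\<^sup>2)"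
    unfolding abs_mult using AC \<open>C \<ge> 0\<close> by (intro mult_mono) (auto simp: power2_eq_square mult.commute)
  moreover have "\<bar>D k - B k / p\<bar> \<le> C + 2 * C / \<rho>" if "k \<in> {1..<r}" for k
  proof -
    have "\<bar>B k / p\<bar> \<le> C / (\<rho> / 2)"
      unfolding abs_divide using BC[OF that] \<open>p > 0\<close> \<open>p \<ge> \<rho> / 2\<close> \<open>\<rho> > 0\<close> \<open>C \<ge> 0\<close>
      by (intro frac_le) auto
    also have "\<dots> = 2 * C / \<rho>"
      by simp
    finally show ?thesis
      using DC[OF that] abs_triangle_ineq4[of "D k" "B k / p"] by linarith
  qed
  then have "\<bar>\<Sum>k\<in>{1..<r}. \<phi> k * (D k - B k / p)\<bar> \<le> (\<Sum>k\<in>{1..<r}. \<bar>\<phi> k\<bar>) * (C + 2 * C / \<rho>)"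
    unfolding sum_distrib_right
    by (intro order_trans[OF sum_abs] sum_mono) (auto simp: abs_mult intro: mult_left_mono)
  moreover have "(\<Sum>k\<in>{1..<r}. \<bar>\<phi> k\<bar>) \<le> (\<Sum>k<r. \<bar>\<phi> k\<bar>)"
    by (rule sum_mono2) auto
  then have "(\<Sum>k\<in>{1..<r}. \<bar>\<phi> k\<bar>) * (C + 2 * C / \<rho>) \<le> L * (C + 2 * C / \<rho>)"
    using L \<open>C \<ge> 0\<close> \<open>\<rho> > 0\<close> by (intro mult_right_mono) auto
  ultimately show ?thesis
    unfolding intercept_elimination[where \<rho>=\<rho> and \<phi>=\<phi> and B=B and D=D, OF \<open>r > 0\<close> A B0 D0 less_imp_neq[OF \<open>p > 0\<close>, symmetric]]
    using abs_triangle_ineq[of "A * (1 / p - 1 / \<rho>)" "\<Sum>k\<in>{1..<r}. \<phi> k * (D k - B k / p)"]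
    by linarith
qed

lemma scaled_sum_eq_sqrt_mult_mean: "(1 / sqrt (real N)) * x = sqrt (real N) * (x / real N)"
proof (cases "N = 0")
  case False
  then have "sqrt (real N) * sqrt (real N) = real N"
    by simp
  with False show ?thesis
    by (simp add: field_simps)
qed simp

lemma weighted_regression_error_bound:
  fixes N r :: nat and \<rho> \<eta> C :: real and w U :: "nat \<Rightarrow> real" and Z :: "nat \<Rightarrow> nat \<Rightarrow> real"
    and \<phi> :: "nat \<Rightarrow> real"
  assumes "r > 0" "\<rho> > 0" and Z0: "\<And>i. Z i 0 = 1"
    and NE: "\<And>k. k < r \<Longrightarrow> (\<Sum>i<N. w i * (U i - (\<Sum>l<r. Z i l * \<phi> l)) * Z i k) = 0"
    and close: "\<And>k l. k < r \<Longrightarrow> l < r \<Longrightarrow>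
          \<bar>(\<Sum>i<N. w i * Z i k * Z i l) / real N - (if k = l then \<rho> else 0)\<bar> \<le> \<eta>"
    and small: "\<And>k. k < r \<Longrightarrow> \<bar>(\<Sum>i<N. w i * U i * Z i k) / real N\<bar> \<le> \<eta>"
    and "\<eta> * real r \<le> \<rho> / 2"
    and AC: "\<bar>(1 / sqrt (real N)) * (\<Sum>i<N. w i * U i)\<bar> \<le> C"
    and BC: "\<And>k. k \<in> {1..<r} \<Longrightarrow> \<bar>(1 / sqrt (real N)) * (\<Sum>i<N. w i * Z i k)\<bar> \<le> C"
    and DC: "\<And>k. k \<in> {1..<r} \<Longrightarrow> \<bar>(1 / sqrt (real N)) * (\<Sum>i<N. Z i k)\<bar> \<le> C"
  shows "\<bar>(\<Sum>k<r. \<phi> k * ((1 / sqrt (real N)) * (\<Sum>i<N. Z i k))) - (1 / sqrt (real N)) * (\<Sum>i<N. w i * U i) / \<rho>\<bar>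
           \<le> \<eta> * ((2 / \<rho>\<^sup>2 + (2 * real r / \<rho>) * (1 + 2 / \<rho>)) * C)"
proof -
  have matrix: "(\<Sum>l<r. (\<Sum>i<N. w i * Z i k * Z i l) * \<phi> l) = (\<Sum>i<N. w i * U i * Z i k)" if "k < r" for k
    using normal_equations_matrix_form[OF NE[OF that]] .
  then have "(\<Sum>l<r. (\<Sum>i<N. w i * Z i k * Z i l) / real N * \<phi> l) = (\<Sum>i<N. w i * U i * Z i k) / real N"
    if "k < r" for k
    using that by (simp add: sum_divide_distrib[symmetric])
  then have L: "(\<Sum>k<r. \<bar>\<phi> k\<bar>) \<le> 2 * real r * \<eta> / \<rho>"
    using close small \<open>\<rho> > 0\<close> \<open>\<eta> * real r \<le> \<rho> / 2\<close> by (rule near_scalar_system_l1_bound)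
  have "\<eta> * 1 \<le> \<eta> * real r"
    using close[OF \<open>r > 0\<close> \<open>r > 0\<close>] \<open>r > 0\<close> by (intro mult_left_mono) auto
  then have "\<eta> \<le> \<rho> / 2"
    using \<open>\<eta> * real r \<le> \<rho> / 2\<close> by linarith
  have "(\<Sum>k<r. \<phi> k * ((1 / sqrt (real N)) * (\<Sum>i<N. w i * Z i k)))
      = (1 / sqrt (real N)) * (\<Sum>l<r. (\<Sum>i<N. w i * Z i 0 * Z i l) * \<phi> l)"
    by (simp add: Z0 sum_distrib_left mult_ac)
  also have "\<dots> = (1 / sqrt (real N)) * (\<Sum>i<N. w i * U i)"
    using matrix[OF \<open>r > 0\<close>] by (simp add: Z0)
  finally have A: "(1 / sqrt (real N)) * (\<Sum>i<N. w i * U i)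
      = (\<Sum>k<r. \<phi> k * ((1 / sqrt (real N)) * (\<Sum>i<N. w i * Z i k)))" ..
  have "\<bar>(\<Sum>k<r. \<phi> k * ((1 / sqrt (real N)) * (\<Sum>i<N. Z i k))) - (1 / sqrt (real N)) * (\<Sum>i<N. w i * U i) / \<rho>\<bar>
      \<le> C * (2 * \<eta> / \<rho>\<^sup>2) + (2 * real r * \<eta> / \<rho>) * (C + 2 * C / \<rho>)"
  proof (rule intercept_elimination_bound[OF \<open>r > 0\<close> A])
    show "(1 / sqrt (real N)) * (\<Sum>i<N. w i * Z i 0) = sqrt (real N) * ((\<Sum>i<N. w i * Z i 0 * Z i 0) / real N)"
      using scaled_sum_eq_sqrt_mult_mean[of N "\<Sum>i<N. w i"] by (simp add: Z0)
    show "(1 / sqrt (real N)) * (\<Sum>i<N. Z i 0) = sqrt (real N)"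
      using scaled_sum_eq_sqrt_mult_mean[of N "real N"] by (cases "N = 0") (simp_all add: Z0)
    show "\<bar>(\<Sum>i<N. w i * Z i 0 * Z i 0) / real N - \<rho>\<bar> \<le> \<eta>"
      using close[OF \<open>r > 0\<close> \<open>r > 0\<close>] by simp
  qed (use \<open>\<eta> \<le> \<rho> / 2\<close> \<open>\<rho> > 0\<close> L AC BC DC in simp_all)
  also have "\<dots> = \<eta> * ((2 / \<rho>\<^sup>2 + (2 * real r / \<rho>) * (1 + 2 / \<rho>)) * C)"
    by (simp add: field_simps power2_eq_square)
  finally show ?thesis .
qed

lemma weighted_regression_error_le_product:
  fixes N r :: nat and \<rho> :: real and w U :: "nat \<Rightarrow> real" and Z :: "nat \<Rightarrow> nat \<Rightarrow> real"
    and \<phi> :: "nat \<Rightarrow> real"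
  defines "\<eta> \<equiv> (\<Sum>kl\<in>{..<r}\<times>{..<r}. \<bar>(\<Sum>i<N. w i * Z i (fst kl) * Z i (snd kl)) / real N
                   - (if fst kl = snd kl then \<rho> else 0)\<bar>)
               + (\<Sum>k<r. \<bar>(\<Sum>i<N. w i * U i * Z i k) / real N\<bar>)"
    and "C \<equiv> \<bar>(1 / sqrt (real N)) * (\<Sum>i<N. w i * U i)\<bar>
               + (\<Sum>k\<in>{1..<r}. \<bar>(1 / sqrt (real N)) * (\<Sum>i<N. w i * Z i k)\<bar>
                               + \<bar>(1 / sqrt (real N)) * (\<Sum>i<N. Z i k)\<bar>)"
  assumes "r > 0" "\<rho> > 0" and Z0: "\<And>i. Z i 0 = 1"
    and NE: "\<And>k. k < r \<Longrightarrow> (\<Sum>i<N. w i * (U i - (\<Sum>l<r. Z i l * \<phi> l)) * Z i k) = 0"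
    and small: "\<eta> \<le> \<rho> / (2 * real r)"
  shows "\<bar>(\<Sum>k<r. \<phi> k * ((1 / sqrt (real N)) * (\<Sum>i<N. Z i k))) - (1 / sqrt (real N)) * (\<Sum>i<N. w i * U i) / \<rho>\<bar>
           \<le> \<eta> * ((2 / \<rho>\<^sup>2 + (2 * real r / \<rho>) * (1 + 2 / \<rho>)) * C)"
proof (rule weighted_regression_error_bound[OF \<open>r > 0\<close> \<open>\<rho> > 0\<close> Z0 NE])
  define dev where "dev kl = \<bar>(\<Sum>i<N. w i * Z i (fst kl) * Z i (snd kl)) / real N
      - (if fst kl = snd kl then \<rho> else 0)\<bar>" for kl
  define cov where "cov k = \<bar>(\<Sum>i<N. w i * U i * Z i k) / real N\<bar>" for k
  have \<eta>_eq: "\<eta> = (\<Sum>kl\<in>{..<r}\<times>{..<r}. dev kl) + (\<Sum>k<r. cov k)"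
    unfolding \<eta>_def dev_def cov_def ..
  have nonneg: "0 \<le> (\<Sum>kl\<in>{..<r}\<times>{..<r}. dev kl)" "0 \<le> (\<Sum>k<r. cov k)"
    by (simp_all add: sum_nonneg dev_def cov_def)
  show "\<bar>(\<Sum>i<N. w i * Z i k * Z i l) / real N - (if k = l then \<rho> else 0)\<bar> \<le> \<eta>"
    if "k < r" "l < r" for k l
  proof -
    have "dev (k, l) \<le> (\<Sum>kl\<in>{..<r}\<times>{..<r}. dev kl)"
      using that by (intro member_le_sum) (auto simp: dev_def)
    then show ?thesis
      using \<eta>_eq nonneg by (simp add: dev_def)
  qed
  show "\<bar>(\<Sum>i<N. w i * U i * Z i k) / real N\<bar> \<le> \<eta>" if "k < r" for k
  proof -
    have "cov k \<le> (\<Sum>k<r. cov k)"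
      using that by (intro member_le_sum) (auto simp: cov_def)
    then show ?thesis
      using \<eta>_eq nonneg by (simp add: cov_def)
  qed
  show "\<eta> * real r \<le> \<rho> / 2"
    using small \<open>r > 0\<close> by (simp add: field_simps)
  define B where "B k = \<bar>(1 / sqrt (real N)) * (\<Sum>i<N. w i * Z i k)\<bar> + \<bar>(1 / sqrt (real N)) * (\<Sum>i<N. Z i k)\<bar>"
    for k
  have C_eq: "C = \<bar>(1 / sqrt (real N)) * (\<Sum>i<N. w i * U i)\<bar> + (\<Sum>k\<in>{1..<r}. B k)"
    unfolding C_def B_def ..
  have "0 \<le> (\<Sum>k\<in>{1..<r}. B k)"
    by (simp add: sum_nonneg B_def)
  then show "\<bar>(1 / sqrt (real N)) * (\<Sum>i<N. w i * U i)\<bar> \<le> C"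
    unfolding C_eq by simp
  show "\<bar>(1 / sqrt (real N)) * (\<Sum>i<N. w i * Z i k)\<bar> \<le> C"
    and "\<bar>(1 / sqrt (real N)) * (\<Sum>i<N. Z i k)\<bar> \<le> C" if "k \<in> {1..<r}" for k
  proof -
    have "B k \<le> (\<Sum>k\<in>{1..<r}. B k)"
      using that by (intro member_le_sum) (auto simp: B_def)
    then show "\<bar>(1 / sqrt (real N)) * (\<Sum>i<N. w i * Z i k)\<bar> \<le> C"
      and "\<bar>(1 / sqrt (real N)) * (\<Sum>i<N. Z i k)\<bar> \<le> C"
      unfolding C_eq B_def by (smt (verit) abs_ge_zero)+
  qed
qed
text \<open>In the application, \<open>w\<close> is the indicator of arm \<open>g\<close>, \<open>u\<close> the projection error \<open>U(g)\<close>,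
  and \<open>z\<close> consists of the constant and the orthonormalised centred covariates.\<close>

locale weighted_regression = iid_sample +
  fixes w u :: "'b \<Rightarrow> real" and z :: "nat \<Rightarrow> 'b \<Rightarrow> real" and r :: nat and \<rho> :: real
  assumes measurable_w[measurable]: "w \<in> borel_measurable S"
    and measurable_u[measurable]: "u \<in> borel_measurable S"
    and measurable_z[measurable]: "\<And>k. z k \<in> borel_measurable S"
    and r_pos: "r > 0" and rho_pos: "\<rho> > 0"
    and z_0: "\<And>x. z 0 x = 1"
    and weight_bounded: "AE \<omega> in M. \<bar>w (D 0 \<omega>)\<bar> \<le> 1"
    and sq_integrable_u: "sq_integrable M (\<lambda>\<omega>. u (D 0 \<omega>))"
    and sq_integrable_z: "\<And>k. k < r \<Longrightarrow> sq_integrable M (\<lambda>\<omega>. z k (D 0 \<omega>))"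
    and weighted_design: "\<And>k l. k < r \<Longrightarrow> l < r \<Longrightarrow>
          expectation (\<lambda>\<omega>. w (D 0 \<omega>) * z k (D 0 \<omega>) * z l (D 0 \<omega>)) = (if k = l then \<rho> else 0)"
    and weighted_orthogonality: "\<And>k. k < r \<Longrightarrow>
          expectation (\<lambda>\<omega>. w (D 0 \<omega>) * u (D 0 \<omega>) * z k (D 0 \<omega>)) = 0"
    and regressors_centred: "\<And>k. 0 < k \<Longrightarrow> k < r \<Longrightarrow> expectation (\<lambda>\<omega>. z k (D 0 \<omega>)) = 0"
begin

lemma o_p1_weighted_moments:
  "o_p1 M (\<lambda>N \<omega>. (\<Sum>kl\<in>{..<r}\<times>{..<r}. \<bar>(\<Sum>i<N. w (D i \<omega>) * z (fst kl) (D i \<omega>) * z (snd kl) (D i \<omega>)) / real N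
                   - (if fst kl = snd kl then \<rho> else 0)\<bar>)
               + (\<Sum>k<r. \<bar>(\<Sum>i<N. w (D i \<omega>) * u (D i \<omega>) * z k (D i \<omega>)) / real N\<bar>))"
proof (intro o_p1_add o_p1_sum o_p1_abs)
  fix kl assume "kl \<in> {..<r}\<times>{..<r}"
  then have "integrable M (\<lambda>\<omega>. w (D 0 \<omega>) * (z (fst kl) (D 0 \<omega>) * z (snd kl) (D 0 \<omega>)))"
    using weight_bounded sq_integrable_z
    by (intro integrable_bounded_mult integrable_mult_sq_integrable) auto
  then show "o_p1 M (\<lambda>N \<omega>. (\<Sum>i<N. w (D i \<omega>) * z (fst kl) (D i \<omega>) * z (snd kl) (D i \<omega>)) / real N
      - (if fst kl = snd kl then \<rho> else 0))"
    using o_p1_sample_mean[of "\<lambda>x. w x * z (fst kl) x * z (snd kl) x"] weighted_design \<open>kl \<in> _\<close>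
    by (auto simp: mult.assoc)
next
  fix k assume "k \<in> {..<r}"
  then have "integrable M (\<lambda>\<omega>. w (D 0 \<omega>) * (u (D 0 \<omega>) * z k (D 0 \<omega>)))"
    using weight_bounded sq_integrable_u sq_integrable_z
    by (intro integrable_bounded_mult integrable_mult_sq_integrable) auto
  then show "o_p1 M (\<lambda>N \<omega>. (\<Sum>i<N. w (D i \<omega>) * u (D i \<omega>) * z k (D i \<omega>)) / real N)"
    using o_p1_sample_mean[of "\<lambda>x. w x * u x * z k x"] weighted_orthogonality \<open>k \<in> _\<close>
    by (auto simp: mult.assoc)
qed auto

lemma bounded_in_prob_weighted_scaled_sums:
  "bounded_in_prob M (\<lambda>N \<omega>. \<bar>(1 / sqrt (real N)) * (\<Sum>i<N. w (D i \<omega>) * u (D i \<omega>))\<bar>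
               + (\<Sum>k\<in>{1..<r}. \<bar>(1 / sqrt (real N)) * (\<Sum>i<N. w (D i \<omega>) * z k (D i \<omega>))\<bar>
                               + \<bar>(1 / sqrt (real N)) * (\<Sum>i<N. z k (D i \<omega>))\<bar>))"
proof (intro bounded_in_prob_add bounded_in_prob_sum bounded_in_prob_abs)
  have "expectation (\<lambda>\<omega>. w (D 0 \<omega>) * u (D 0 \<omega>)) = 0"
    using weighted_orthogonality[OF r_pos] by (simp add: z_0)
  then show "bounded_in_prob M (\<lambda>N \<omega>. (1 / sqrt (real N)) * (\<Sum>i<N. w (D i \<omega>) * u (D i \<omega>)))"
    using weight_bounded sq_integrable_u
    by (intro bounded_in_prob_scaled_sum_D[of "\<lambda>x. w x * u x"] sq_integrable_bounded_mult) auto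
next
  fix k assume k: "k \<in> {1..<r}"
  have "expectation (\<lambda>\<omega>. w (D 0 \<omega>) * z k (D 0 \<omega>)) = 0"
    using weighted_design[of k 0] k r_pos by (simp add: z_0)
  then show "bounded_in_prob M (\<lambda>N \<omega>. (1 / sqrt (real N)) * (\<Sum>i<N. w (D i \<omega>) * z k (D i \<omega>)))"
    using weight_bounded sq_integrable_z k
    by (intro bounded_in_prob_scaled_sum_D[of "\<lambda>x. w x * z k x"] sq_integrable_bounded_mult) auto
  show "bounded_in_prob M (\<lambda>N \<omega>. (1 / sqrt (real N)) * (\<Sum>i<N. z k (D i \<omega>)))"
    using sq_integrable_z regressors_centred k by (intro bounded_in_prob_scaled_sum_D) auto
qed auto

theorem o_p1_weighted_regression_error:
  fixes \<phi> :: "nat \<Rightarrow> 'a \<Rightarrow> nat \<Rightarrow> real"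
  assumes normal: "AE \<omega> in M. \<forall>N k. k < r \<longrightarrow>
      (\<Sum>i<N. w (D i \<omega>) * (u (D i \<omega>) - (\<Sum>l<r. z l (D i \<omega>) * \<phi> N \<omega> l)) * z k (D i \<omega>)) = 0"
  shows "o_p1 M (\<lambda>N \<omega>. (\<Sum>k<r. \<phi> N \<omega> k * ((1 / sqrt (real N)) * (\<Sum>i<N. z k (D i \<omega>))))
           - (1 / sqrt (real N)) * (\<Sum>i<N. w (D i \<omega>) * u (D i \<omega>)) / \<rho>)"
proof -
  define X where "X N \<omega> =
    (\<Sum>kl\<in>{..<r}\<times>{..<r}. \<bar>(\<Sum>i<N. w (D i \<omega>) * z (fst kl) (D i \<omega>) * z (snd kl) (D i \<omega>)) / real N
                   - (if fst kl = snd kl then \<rho> else 0)\<bar>)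
    + (\<Sum>k<r. \<bar>(\<Sum>i<N. w (D i \<omega>) * u (D i \<omega>) * z k (D i \<omega>)) / real N\<bar>)" for N \<omega>
  define C where "C N \<omega> = \<bar>(1 / sqrt (real N)) * (\<Sum>i<N. w (D i \<omega>) * u (D i \<omega>))\<bar>
    + (\<Sum>k\<in>{1..<r}. \<bar>(1 / sqrt (real N)) * (\<Sum>i<N. w (D i \<omega>) * z k (D i \<omega>))\<bar>
                  + \<bar>(1 / sqrt (real N)) * (\<Sum>i<N. z k (D i \<omega>))\<bar>)" for N \<omega>
  define a where "a = 2 / \<rho>\<^sup>2 + (2 * real r / \<rho>) * (1 + 2 / \<rho>)"
  have "X N \<omega> \<ge> 0" "C N \<omega> \<ge> 0" for N \<omega>
    unfolding X_def C_def by (intro add_nonneg_nonneg sum_nonneg abs_ge_zero)+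
  have "a \<ge> 0"
    unfolding a_def using rho_pos by simp
  have bound: "AE \<omega> in M. \<forall>N. \<bar>X N \<omega>\<bar> \<le> \<rho> / (2 * real r) \<longrightarrow>
      \<bar>(\<Sum>k<r. \<phi> N \<omega> k * ((1 / sqrt (real N)) * (\<Sum>i<N. z k (D i \<omega>))))
           - (1 / sqrt (real N)) * (\<Sum>i<N. w (D i \<omega>) * u (D i \<omega>)) / \<rho>\<bar> \<le> \<bar>X N \<omega>\<bar> * \<bar>a * C N \<omega>\<bar>"
    using normal
  proof eventually_elim
    case (elim \<omega>)
    show ?case
    proof (intro allI impI)
      fix N assume small: "\<bar>X N \<omega>\<bar> \<le> \<rho> / (2 * real r)"
      have "\<bar>(\<Sum>k<r. \<phi> N \<omega> k * ((1 / sqrt (real N)) * (\<Sum>i<N. z k (D i \<omega>))))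
           - (1 / sqrt (real N)) * (\<Sum>i<N. w (D i \<omega>) * u (D i \<omega>)) / \<rho>\<bar> \<le> X N \<omega> * (a * C N \<omega>)"
        unfolding X_def C_def a_def
        by (rule weighted_regression_error_le_product[OF r_pos rho_pos, where w="\<lambda>i. w (D i \<omega>)"
              and U="\<lambda>i. u (D i \<omega>)" and Z="\<lambda>i k. z k (D i \<omega>)" and \<phi>="\<phi> N \<omega>" and N=N])
          (rule z_0, use elim in blast,
            use small abs_of_nonneg[OF \<open>X N \<omega> \<ge> 0\<close>] in \<open>unfold X_def, linarith\<close>)
      then show "\<bar>(\<Sum>k<r. \<phi> N \<omega> k * ((1 / sqrt (real N)) * (\<Sum>i<N. z k (D i \<omega>))))
           - (1 / sqrt (real N)) * (\<Sum>i<N. w (D i \<omega>) * u (D i \<omega>)) / \<rho>\<bar> \<le> \<bar>X N \<omega>\<bar> * \<bar>a * C N \<omega>\<bar>"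
        using \<open>X N \<omega> \<ge> 0\<close> \<open>C N \<omega> \<ge> 0\<close> \<open>a \<ge> 0\<close> by simp
    qed
  qed
  have "o_p1 M X"
    using o_p1_weighted_moments unfolding X_def .
  moreover have "bounded_in_prob M (\<lambda>N \<omega>. a * C N \<omega>)"
    using bounded_in_prob_cmult[OF bounded_in_prob_weighted_scaled_sums] unfolding C_def .
  moreover have "\<rho> / (2 * real r) > 0"
    using rho_pos r_pos by simp
  ultimately show ?thesis
    using bound by (rule o_p1_bounded_product)
qed

end

section \<open>Regression adjustment in a randomised experiment\<close>

definition centred_regressor :: "(nat \<Rightarrow> nat \<Rightarrow> real) \<Rightarrow> (nat \<Rightarrow> real) \<Rightarrow> nat \<Rightarrow> nat \<Rightarrow> (nat \<Rightarrow> real) \<Rightarrow> real"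
  where "centred_regressor t m K k x = (case k of 0 \<Rightarrow> 1 | Suc k' \<Rightarrow> (\<Sum>j<K. t k' j * (x j - m j)))"

definition centred_coeff :: "(nat \<Rightarrow> nat \<Rightarrow> real) \<Rightarrow> (nat \<Rightarrow> real) \<Rightarrow> nat \<Rightarrow> real \<Rightarrow> (nat \<Rightarrow> real) \<Rightarrow> nat \<Rightarrow> real"
  where "centred_coeff c m K a b l = (case l of 0 \<Rightarrow> a + (\<Sum>j<K. m j * b j) | Suc k \<Rightarrow> (\<Sum>j<K. b j * c j k))"

lemma affine_eq_centred_regressor_sum:
  assumes rep: "\<And>j. j < K \<Longrightarrow> x j - m j = (\<Sum>k<r. c j k * centred_regressor t m K (Suc k) x)"
  shows "a + (\<Sum>j<K. x j * b j) = (\<Sum>l<Suc r. centred_regressor t m K l x * centred_coeff c m K a b l)"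
proof -
  have "(\<Sum>l<Suc r. centred_regressor t m K l x * centred_coeff c m K a b l)
      = (a + (\<Sum>j<K. m j * b j)) + (\<Sum>k<r. centred_regressor t m K (Suc k) x * (\<Sum>j<K. b j * c j k))"
    unfolding sum.lessThan_Suc_shift by (simp add: centred_regressor_def centred_coeff_def)
  also have "(\<Sum>k<r. centred_regressor t m K (Suc k) x * (\<Sum>j<K. b j * c j k))
      = (\<Sum>j<K. b j * (\<Sum>k<r. c j k * centred_regressor t m K (Suc k) x))"
    by (simp add: sum_distrib_left sum_distrib_right sum.swap[of _ "{..<K}"] mult_ac)
  also have "\<dots> = (\<Sum>j<K. b j * (x j - m j))"
    using rep by simp
  finally show ?thesis
    by (simp add: algebra_simps sum_subtractf)
qed

lemma sum_mult_centred_regressor_eq_0: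
  assumes "(\<Sum>i\<in>I. e i) = 0" "\<And>j. j < K \<Longrightarrow> (\<Sum>i\<in>I. e i * x i j) = 0"
  shows "(\<Sum>i\<in>I. e i * centred_regressor t m K k (x i)) = 0"
proof (cases k)
  case 0
  then show ?thesis using assms(1) by (simp add: centred_regressor_def)
next
  case (Suc k')
  have "(\<Sum>i\<in>I. e i * centred_regressor t m K k (x i))
      = (\<Sum>j<K. t k' j * ((\<Sum>i\<in>I. e i * x i j) - m j * (\<Sum>i\<in>I. e i)))"
    by (simp add: Suc centred_regressor_def sum_distrib_left sum_distrib_right sum_subtractf
        sum.swap[of _ I] algebra_simps)
  then show ?thesis
    using assms by simp
qed

lemma sum_selected_eq:
  fixes w f :: "nat \<Rightarrow> real"
  assumes "\<And>i. i < N \<Longrightarrow> w i = 0 \<or> w i = 1"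
  shows "(\<Sum>i\<in>{i. i < N \<and> w i = 1}. f i) = (\<Sum>i<N. w i * f i)"
proof -
  have "w i * f i = (if w i = 1 then f i else 0)" if "i < N" for i
    using assms[OF that] by auto
  then have "(\<Sum>i<N. w i * f i) = (\<Sum>i\<in>{..<N} \<inter> {i. w i = 1}. f i)"
    by (simp add: sum.inter_restrict)
  also have "{..<N} \<inter> {i. w i = 1} = {i. i < N \<and> w i = 1}"
    by auto
  finally show ?thesis ..
qed

lemma assigned_outcome:
  fixes w y :: "nat \<Rightarrow> real"
  assumes "\<forall>h\<in>{1..G}. w h = 0 \<or> w h = 1" "(\<Sum>h\<in>{1..G}. w h) = 1" "g \<in> {1..G}" "w g = 1"
  shows "(\<Sum>h\<in>{1..G}. w h * y h) = y g"
proof -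
  have "(\<Sum>h\<in>{1..G} - {g}. w h) = 0"
    using assms(2-4) by (simp add: sum.remove)
  moreover have "\<forall>h\<in>{1..G} - {g}. 0 \<le> w h"
  proof
    fix h assume "h \<in> {1..G} - {g}"
    then have "w h = 0 \<or> w h = 1"
      using assms(1) by blast
    then show "0 \<le> w h"
      by auto
  qed
  ultimately have "\<forall>h\<in>{1..G} - {g}. w h = 0"
    using sum_nonneg_eq_0_iff[of "{1..G} - {g}" w] by blast
  then show ?thesis
    using assms(3,4) by (simp add: sum.remove)
qed

lemma ols_normal_equations_centred:
  fixes w y yo \<beta> :: "nat \<Rightarrow> real" and x :: "nat \<Rightarrow> nat \<Rightarrow> real" and \<mu> :: real
  assumes w01: "\<And>i. i < N \<Longrightarrow> w i = 0 \<or> w i = 1"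
    and obs: "\<And>i. i < N \<Longrightarrow> w i = 1 \<Longrightarrow> yo i = y i"
    and rep: "\<And>i j. i < N \<Longrightarrow> j < K \<Longrightarrow> x i j - m j = (\<Sum>k<r. c j k * centred_regressor t m K (Suc k) (x i))"
    and ols: "\<forall>a' b'. (\<Sum>i\<in>{i. i < N \<and> w i = 1}. (yo i - a - (\<Sum>j<K. x i j * b j))\<^sup>2)
                   \<le> (\<Sum>i\<in>{i. i < N \<and> w i = 1}. (yo i - a' - (\<Sum>j<K. x i j * b' j))\<^sup>2)"
  defines "\<phi> \<equiv> \<lambda>l. centred_coeff c m K a b l - centred_coeff c m K (\<mu> - (\<Sum>j<K. m j * \<beta> j)) \<beta> l"
  shows "(\<Sum>i<N. w i * ((y i - \<mu> - (\<Sum>j<K. (x i j - m j) * \<beta> j))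
            - (\<Sum>l<Suc r. centred_regressor t m K l (x i) * \<phi> l)) * centred_regressor t m K k (x i)) = 0"
proof -
  define S where "S = {i. i < N \<and> w i = 1}"
  define res where "res i = yo i - a - (\<Sum>j<K. x i j * b j)" for i
  have fit: "(\<Sum>l<Suc r. centred_regressor t m K l (x i) * \<phi> l)
      = (a + (\<Sum>j<K. x i j * b j)) - (\<mu> + (\<Sum>j<K. (x i j - m j) * \<beta> j))" if "i < N" for i
    using affine_eq_centred_regressor_sum[OF rep[OF that], of a b]
      affine_eq_centred_regressor_sum[OF rep[OF that], of "\<mu> - (\<Sum>j<K. m j * \<beta> j)" \<beta>]
    by (simp add: \<phi>_def right_diff_distrib sum_subtractf algebra_simps)
  have "(\<Sum>i<N. w i * ((y i - \<mu> - (\<Sum>j<K. (x i j - m j) * \<beta> j))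
            - (\<Sum>l<Suc r. centred_regressor t m K l (x i) * \<phi> l)) * centred_regressor t m K k (x i))
      = (\<Sum>i<N. w i * (res i * centred_regressor t m K k (x i)))"
  proof (rule sum.cong[OF refl])
    fix i assume "i \<in> {..<N}"
    then have i: "i < N" by simp
    consider "w i = 1" | "w i = 0"
      using w01[OF i] by blast
    then show "w i * ((y i - \<mu> - (\<Sum>j<K. (x i j - m j) * \<beta> j))
        - (\<Sum>l<Suc r. centred_regressor t m K l (x i) * \<phi> l)) * centred_regressor t m K k (x i)
      = w i * (res i * centred_regressor t m K k (x i))"
      by cases (simp_all add: obs[OF i] fit[OF i] res_def del: sum.lessThan_Suc)
  qed
  also have "\<dots> = (\<Sum>i\<in>S. res i * centred_regressor t m K k (x i))"
    unfolding S_def using w01 by (rule sum_selected_eq[symmetric])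
  also have "\<dots> = 0"
    using least_squares_normal_equations[OF ols] unfolding S_def res_def
    by (intro sum_mult_centred_regressor_eq_0) auto
  finally show ?thesis .
qed

lemma scaled_estimation_error_centred:
  fixes x :: "nat \<Rightarrow> nat \<Rightarrow> real" and v b \<beta> :: "nat \<Rightarrow> real" and a \<mu> :: real
  assumes rep: "\<And>i j. i < N \<Longrightarrow> j < K \<Longrightarrow> x i j - m j = (\<Sum>k<r. c j k * centred_regressor t m K (Suc k) (x i))"
  defines "\<phi> \<equiv> \<lambda>l. centred_coeff c m K a b l - centred_coeff c m K (\<mu> - (\<Sum>j<K. m j * \<beta> j)) \<beta> l"
  shows "sqrt (real N) * ((a + (\<Sum>j<K. ((\<Sum>i<N. x i j) / real N) * b j)) - \<mu>)
           - (1 / sqrt (real N)) * (\<Sum>i<N. (\<Sum>j<K. (x i j - m j) * \<beta> j) + v i)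
         = (\<Sum>l<Suc r. \<phi> l * ((1 / sqrt (real N)) * (\<Sum>i<N. centred_regressor t m K l (x i))))
           - (1 / sqrt (real N)) * (\<Sum>i<N. v i)"
proof (cases "N = 0")
  case False
  have fit: "(\<Sum>l<Suc r. centred_regressor t m K l (x i) * \<phi> l)
      = (a + (\<Sum>j<K. x i j * b j)) - (\<mu> + (\<Sum>j<K. (x i j - m j) * \<beta> j))" if "i < N" for i
    using affine_eq_centred_regressor_sum[OF rep[OF that], of a b]
      affine_eq_centred_regressor_sum[OF rep[OF that], of "\<mu> - (\<Sum>j<K. m j * \<beta> j)" \<beta>]
    by (simp add: \<phi>_def right_diff_distrib sum_subtractf algebra_simps)
  have "(\<Sum>j<K. ((\<Sum>i<N. x i j) / real N) * b j) = (\<Sum>j<K. \<Sum>i<N. x i j * b j) / real N"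
    by (simp add: sum_divide_distrib sum_distrib_right)
  also have "\<dots> = (\<Sum>i<N. \<Sum>j<K. x i j * b j) / real N"
    by (subst sum.swap) (rule refl)
  finally have "(a + (\<Sum>j<K. ((\<Sum>i<N. x i j) / real N) * b j)) - \<mu>
      = (\<Sum>i<N. (a + (\<Sum>j<K. x i j * b j)) - \<mu>) / real N"
    using False by (simp add: sum_subtractf sum.distrib field_simps)
  then have "sqrt (real N) * ((a + (\<Sum>j<K. ((\<Sum>i<N. x i j) / real N) * b j)) - \<mu>)
      - (1 / sqrt (real N)) * (\<Sum>i<N. \<Sum>j<K. (x i j - m j) * \<beta> j)
      = (1 / sqrt (real N)) * (\<Sum>i<N. ((a + (\<Sum>j<K. x i j * b j)) - \<mu>) - (\<Sum>j<K. (x i j - m j) * \<beta> j))"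
    by (simp only: scaled_sum_eq_sqrt_mult_mean sum_subtractf right_diff_distrib diff_divide_distrib)
  also have "\<dots> = (1 / sqrt (real N)) * (\<Sum>i<N. \<Sum>l<Suc r. centred_regressor t m K l (x i) * \<phi> l)"
    using fit by (simp add: diff_diff_eq del: sum.lessThan_Suc)
  also have "\<dots> = (\<Sum>l<Suc r. \<phi> l * ((1 / sqrt (real N)) * (\<Sum>i<N. centred_regressor t m K l (x i))))"
    by (subst sum.swap) (simp add: sum_distrib_left mult_ac del: sum.lessThan_Suc)
  finally show ?thesis
    by (simp add: sum.distrib algebra_simps)
qed simp

lemma unit_data_components[simp]:
  "g \<in> {1..G} \<Longrightarrow> fst (unit_data G K W Y X i \<omega>) g = W i \<omega> g"
  "g \<in> {1..G} \<Longrightarrow> fst (snd (unit_data G K W Y X i \<omega>)) g = Y i \<omega> g"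
  "j < K \<Longrightarrow> snd (snd (unit_data G K W Y X i \<omega>)) j = X i \<omega> j"
  by (simp_all add: unit_data_def)

lemma centred_regressor_restrict[simp]:
  "centred_regressor t m K k (restrict x {..<K}) = centred_regressor t m K k x"
  by (simp add: centred_regressor_def split: nat.split)

lemma centred_regressor_unit_data[simp]:
  "centred_regressor t m K k (snd (snd (unit_data G K W Y X i \<omega>))) = centred_regressor t m K k (X i \<omega>)"
  by (simp add: unit_data_def)

lemma measurable_unit_space_components:
  "g \<in> {1..G} \<Longrightarrow> (\<lambda>d. fst d g) \<in> borel_measurable (unit_space G K)"
  "g \<in> {1..G} \<Longrightarrow> (\<lambda>d. fst (snd d) g) \<in> borel_measurable (unit_space G K)"
  "j < K \<Longrightarrow> (\<lambda>d. snd (snd d) j) \<in> borel_measurable (unit_space G K)"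
  by (auto simp: unit_space_def)

lemma measurable_centred_regressor[measurable]:
  "(\<lambda>d. centred_regressor t m K k (snd (snd d))) \<in> borel_measurable (unit_space G K)"
  using measurable_unit_space_components(3)
  by (auto simp: centred_regressor_def split: nat.split)

lemma sigma_sets_vimage_comp_subset:
  assumes V: "V \<in> M \<rightarrow>\<^sub>M S" and f: "f \<in> S \<rightarrow>\<^sub>M T"
  shows "sigma_sets (space M) {(\<lambda>\<omega>. f (V \<omega>)) -` A \<inter> space M | A. A \<in> sets T}
           \<subseteq> sigma_sets (space M) {V -` A \<inter> space M | A. A \<in> sets S}"
proof (rule sigma_sets_mono, safe)
  fix A assume "A \<in> sets T"
  then have "V -` (f -` A \<inter> space S) \<inter> space M \<in> {V -` A \<inter> space M | A. A \<in> sets S}"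
    using measurable_sets[OF f] by blast
  moreover have "(\<lambda>\<omega>. f (V \<omega>)) -` A \<inter> space M = V -` (f -` A \<inter> space S) \<inter> space M"
    using measurable_space[OF V] by auto
  ultimately show "(\<lambda>\<omega>. f (V \<omega>)) -` A \<inter> space M \<in> sigma_sets (space M) {V -` A \<inter> space M | A. A \<in> sets S}"
    by (simp add: sigma_sets.Basic)
qed

locale treatment_experiment =
  iid_sample M "unit_space G K" "unit_data G K W Y X"
  for M :: "'a measure" and G K :: nat and W Y X :: "nat \<Rightarrow> 'a \<Rightarrow> nat \<Rightarrow> real" +
  assumes assignment_valid: "\<And>i. AE \<omega> in M. (\<forall>g\<in>{1..G}. W i \<omega> g = 0 \<or> W i \<omega> g = 1) \<and> (\<Sum>g\<in>{1..G}. W i \<omega> g) = 1"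
    and assignment_indep: "indep_set
          (sigma_sets (space M) {(\<lambda>\<omega>. restrict (W 0 \<omega>) {1..G}) -` A \<inter> space M
             | A. A \<in> sets (PiM {1..G} (\<lambda>_. borel))})
          (sigma_sets (space M) {(\<lambda>\<omega>. (restrict (Y 0 \<omega>) {1..G}, restrict (X 0 \<omega>) {..<K})) -` A \<inter> space M
             | A. A \<in> sets (PiM {1..G} (\<lambda>_. borel) \<Otimes>\<^sub>M PiM {..<K} (\<lambda>_. borel))})"
    and outcome_sq: "\<And>g. g \<in> {1..G} \<Longrightarrow> integrable M (\<lambda>\<omega>. (Y 0 \<omega> g)\<^sup>2)"
    and covariate_sq: "\<And>j. j < K \<Longrightarrow> integrable M (\<lambda>\<omega>. (X 0 \<omega> j)\<^sup>2)"
begin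

definition rho :: "nat \<Rightarrow> real" where "rho g = prob {\<omega>\<in>space M. W 0 \<omega> g = 1}"
definition mu :: "nat \<Rightarrow> real" where "mu g = expectation (\<lambda>\<omega>. Y 0 \<omega> g)"
definition muX :: "nat \<Rightarrow> real" where "muX j = expectation (\<lambda>\<omega>. X 0 \<omega> j)"

lemma sq_integrable_outcome: "g \<in> {1..G} \<Longrightarrow> sq_integrable M (\<lambda>\<omega>. Y 0 \<omega> g)"
  using measurable_compose[OF random_variable_D measurable_unit_space_components(2)] outcome_sq
  by (simp add: sq_integrable_def)

lemma sq_integrable_covariate: "j < K \<Longrightarrow> sq_integrable M (\<lambda>\<omega>. X 0 \<omega> j)"
  using measurable_compose[OF random_variable_D measurable_unit_space_components(3)] covariate_sq
  by (simp add: sq_integrable_def)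

lemma measurable_assignment[measurable]: "g \<in> {1..G} \<Longrightarrow> (\<lambda>\<omega>. W i \<omega> g) \<in> borel_measurable M"
  using measurable_compose[OF random_variable_D measurable_unit_space_components(1)] by simp

lemma assignment_01: "g \<in> {1..G} \<Longrightarrow> AE \<omega> in M. W i \<omega> g = 0 \<or> W i \<omega> g = 1"
  using assignment_valid[of i] by eventually_elim auto

lemma expectation_assignment: "g \<in> {1..G} \<Longrightarrow> expectation (\<lambda>\<omega>. W 0 \<omega> g) = rho g"
proof -
  assume g: "g \<in> {1..G}"
  have "AE \<omega> in M. W 0 \<omega> g = indicator {\<omega>\<in>space M. W 0 \<omega> g = 1} \<omega>"
    using assignment_01[OF g] AE_space by eventually_elim (auto simp: indicator_def)
  then have "expectation (\<lambda>\<omega>. W 0 \<omega> g) = expectation (indicator {\<omega>\<in>space M. W 0 \<omega> g = 1})"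
    using g by (intro integral_cong_AE) auto
  then show ?thesis
    using g by (simp add: rho_def)
qed

lemma indep_var_assignment:
  assumes g: "g \<in> {1..G}"
    and h: "h \<in> borel_measurable (PiM {1..G} (\<lambda>_. borel) \<Otimes>\<^sub>M PiM {..<K} (\<lambda>_. borel))"
  shows "indep_var borel (\<lambda>\<omega>. W 0 \<omega> g) borel (\<lambda>\<omega>. h (snd (unit_data G K W Y X 0 \<omega>)))"
proof -
  have D0: "unit_data G K W Y X 0 \<in> M \<rightarrow>\<^sub>M PiM {1..G} (\<lambda>_. borel) \<Otimes>\<^sub>M (PiM {1..G} (\<lambda>_. borel) \<Otimes>\<^sub>M PiM {..<K} (\<lambda>_. borel))"
    using random_variable_D[of 0] unfolding unit_space_def .
  have W0: "(\<lambda>\<omega>. restrict (W 0 \<omega>) {1..G}) \<in> M \<rightarrow>\<^sub>M PiM {1..G} (\<lambda>_. borel)"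
    using measurable_compose[OF D0 measurable_fst] by (simp add: unit_data_def comp_def)
  have YX0: "(\<lambda>\<omega>. (restrict (Y 0 \<omega>) {1..G}, restrict (X 0 \<omega>) {..<K}))
      \<in> M \<rightarrow>\<^sub>M PiM {1..G} (\<lambda>_. borel) \<Otimes>\<^sub>M PiM {..<K} (\<lambda>_. borel)"
    using measurable_compose[OF D0 measurable_snd] by (simp add: unit_data_def comp_def)
  have proj: "(\<lambda>v. v g) \<in> PiM {1..G} (\<lambda>_. borel) \<rightarrow>\<^sub>M borel"
    using g by simp
  have "indep_set (sigma_sets (space M) {(\<lambda>\<omega>. restrict (W 0 \<omega>) {1..G} g) -` A \<inter> space M | A. A \<in> sets borel})
      (sigma_sets (space M) {(\<lambda>\<omega>. h (restrict (Y 0 \<omega>) {1..G}, restrict (X 0 \<omega>) {..<K})) -` A \<inter> space M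
        | A. A \<in> sets borel})"
    unfolding indep_set_def
    by (rule indep_sets_mono_sets[OF assignment_indep[unfolded indep_set_def]])
      (use sigma_sets_vimage_comp_subset[OF W0 proj] sigma_sets_vimage_comp_subset[OF YX0 h] in
        \<open>auto split: bool.split\<close>)
  moreover have "(\<lambda>\<omega>. restrict (W 0 \<omega>) {1..G} g) = (\<lambda>\<omega>. W 0 \<omega> g)"
    using g by auto
  ultimately show ?thesis
    unfolding indep_var_eq using measurable_compose[OF W0 proj] measurable_compose[OF YX0 h]
    by (simp add: unit_data_def)
qed

lemma expectation_assignment_mult:
  assumes g: "g \<in> {1..G}"
    and h: "h \<in> borel_measurable (PiM {1..G} (\<lambda>_. borel) \<Otimes>\<^sub>M PiM {..<K} (\<lambda>_. borel))"
    and int: "integrable M (\<lambda>\<omega>. h (snd (unit_data G K W Y X 0 \<omega>)))"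
  shows "expectation (\<lambda>\<omega>. W 0 \<omega> g * h (snd (unit_data G K W Y X 0 \<omega>)))
           = rho g * expectation (\<lambda>\<omega>. h (snd (unit_data G K W Y X 0 \<omega>)))"
proof -
  have "integrable M (\<lambda>\<omega>. W 0 \<omega> g)"
  proof (rule integrable_const_bound[where B=1])
    show "AE \<omega> in M. norm (W 0 \<omega> g) \<le> 1"
      using assignment_01[OF g, of 0] by eventually_elim auto
  qed (use g in simp)
  then show ?thesis
    using indep_var_lebesgue_integral[OF indep_var_assignment[OF g h] _ int] expectation_assignment[OF g]
    by simp
qed

lemma sq_integrable_centred_regressor:
  "sq_integrable M (\<lambda>\<omega>. centred_regressor t muX K k (X 0 \<omega>))"
  using sq_integrable_covariate
  by (cases k) (auto simp: centred_regressor_def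
      intro!: sq_integrable_const sq_integrable_sum sq_integrable_cmult sq_integrable_diff)

lemma expectation_centred_covariate: "j < K \<Longrightarrow> expectation (\<lambda>\<omega>. X 0 \<omega> j - muX j) = 0"
  using sq_integrable_integrable[OF sq_integrable_covariate] by (simp add: muX_def prob_space)

lemma expectation_mult_centred_regressor:
  assumes "sq_integrable M h"
  shows "expectation (\<lambda>\<omega>. h \<omega> * centred_regressor t muX K (Suc k) (X 0 \<omega>))
           = (\<Sum>j<K. t k j * expectation (\<lambda>\<omega>. h \<omega> * (X 0 \<omega> j - muX j)))"
proof -
  have "expectation (\<lambda>\<omega>. h \<omega> * centred_regressor t muX K (Suc k) (X 0 \<omega>))
      = expectation (\<lambda>\<omega>. (\<Sum>j<K. t k j * (X 0 \<omega> j - muX j)) * h \<omega>)"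
    by (simp add: centred_regressor_def mult.commute)
  also have "\<dots> = (\<Sum>j<K. t k j * expectation (\<lambda>\<omega>. (X 0 \<omega> j - muX j) * h \<omega>))"
    using assms sq_integrable_covariate
    by (intro integral_lincomb_mult) (auto intro: sq_integrable_diff sq_integrable_const)
  finally show ?thesis
    by (simp add: mult.commute)
qed

lemma centred_covariates_orthonormalisation:
  obtains r t c where "L2_orthonormal M r (\<lambda>k \<omega>. centred_regressor t muX K (Suc k) (X 0 \<omega>))"
    "\<And>j. j < K \<Longrightarrow> AE \<omega> in M. X 0 \<omega> j - muX j
                          = (\<Sum>k<r. c j k * centred_regressor t muX K (Suc k) (X 0 \<omega>))"
proof -
  define F where "F j \<omega> = X 0 \<omega> j - muX j" for j \<omega>
  have "sq_integrable M (F j)" if "j < K" for j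
    unfolding F_def using sq_integrable_covariate[OF that] by (intro sq_integrable_diff sq_integrable_const)
  then obtain r Z where lc: "\<forall>k<r. is_lincomb F K (Z k)" and ON: "L2_orthonormal M r Z"
    and rep: "\<forall>j<K. \<exists>c. AE \<omega> in M. F j \<omega> = (\<Sum>k<r. c k * Z k \<omega>)"
    using gram_schmidt_L2[of K M F] by blast
  obtain t where t: "\<And>k \<omega>. k < r \<Longrightarrow> Z k \<omega> = (\<Sum>j<K. t k j * F j \<omega>)"
    using lc unfolding is_lincomb_def by metis
  obtain c where c: "\<And>j. j < K \<Longrightarrow> AE \<omega> in M. F j \<omega> = (\<Sum>k<r. c j k * Z k \<omega>)"
    using rep by metis
  have Z: "Z k \<omega> = centred_regressor t muX K (Suc k) (X 0 \<omega>)" if "k < r" for k \<omega>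
    using t[OF that] by (simp add: centred_regressor_def F_def)
  show ?thesis
  proof (rule that[of r t c])
    show "L2_orthonormal M r (\<lambda>k \<omega>. centred_regressor t muX K (Suc k) (X 0 \<omega>))"
      using ON by (simp add: L2_orthonormal_def Z[symmetric])
    show "AE \<omega> in M. X 0 \<omega> j - muX j = (\<Sum>k<r. c j k * centred_regressor t muX K (Suc k) (X 0 \<omega>))"
      if "j < K" for j
      using c[OF that] by eventually_elim (simp add: F_def Z)
  qed
qed

end

locale treatment_arm = treatment_experiment +
  fixes g :: nat and \<beta> :: "nat \<Rightarrow> real" and r :: nat and t c :: "nat \<Rightarrow> nat \<Rightarrow> real"
  assumes arm: "g \<in> {1..G}" and rho_pos: "rho g > 0"
    and lin_proj: "is_lin_proj M K (\<lambda>\<omega> j. X 0 \<omega> j - muX j) (\<lambda>\<omega>. Y 0 \<omega> g - mu g) \<beta>"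
    and orthonormal: "L2_orthonormal M r (\<lambda>k \<omega>. centred_regressor t muX K (Suc k) (X 0 \<omega>))"
    and covariate_rep: "\<And>j. j < K \<Longrightarrow> AE \<omega> in M. X 0 \<omega> j - muX j
                            = (\<Sum>k<r. c j k * centred_regressor t muX K (Suc k) (X 0 \<omega>))"
begin

definition weight :: "(nat \<Rightarrow> real) \<times> (nat \<Rightarrow> real) \<times> (nat \<Rightarrow> real) \<Rightarrow> real"
  where "weight d = fst d g"

definition residual :: "(nat \<Rightarrow> real) \<times> (nat \<Rightarrow> real) \<times> (nat \<Rightarrow> real) \<Rightarrow> real"
  where "residual d = fst (snd d) g - mu g - (\<Sum>j<K. (snd (snd d) j - muX j) * \<beta> j)"

definition regressor :: "nat \<Rightarrow> (nat \<Rightarrow> real) \<times> (nat \<Rightarrow> real) \<times> (nat \<Rightarrow> real) \<Rightarrow> real"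
  where "regressor k d = centred_regressor t muX K k (snd (snd d))"

lemma unit_data_arm[simp]:
  "weight (unit_data G K W Y X i \<omega>) = W i \<omega> g"
  "residual (unit_data G K W Y X i \<omega>) = Y i \<omega> g - mu g - (\<Sum>j<K. (X i \<omega> j - muX j) * \<beta> j)"
  "regressor k (unit_data G K W Y X i \<omega>) = centred_regressor t muX K k (X i \<omega>)"
  using arm by (simp_all add: weight_def residual_def regressor_def unit_data_def)

lemma measurable_arm[measurable]:
  "weight \<in> borel_measurable (unit_space G K)" "residual \<in> borel_measurable (unit_space G K)"
  "regressor k \<in> borel_measurable (unit_space G K)"
  using arm measurable_unit_space_components unfolding weight_def residual_def regressor_def by auto

lemma sq_integrable_residual: "sq_integrable M (\<lambda>\<omega>. Y 0 \<omega> g - mu g - (\<Sum>j<K. (X 0 \<omega> j - muX j) * \<beta> j))"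
  using sq_integrable_outcome[OF arm] sq_integrable_covariate
  by (auto simp: mult.commute[of _ "\<beta> _"]
      intro!: sq_integrable_diff sq_integrable_sum sq_integrable_cmult sq_integrable_const)

lemma residual_orthogonal:
  "expectation (\<lambda>\<omega>. (Y 0 \<omega> g - mu g - (\<Sum>j<K. (X 0 \<omega> j - muX j) * \<beta> j))
                   * centred_regressor t muX K k (X 0 \<omega>)) = 0"
proof (cases k)
  case 0
  have int: "integrable M (\<lambda>\<omega>. \<Sum>j<K. (X 0 \<omega> j - muX j) * \<beta> j)"
    using sq_integrable_integrable[OF sq_integrable_covariate] by auto
  have "expectation (\<lambda>\<omega>. \<Sum>j<K. (X 0 \<omega> j - muX j) * \<beta> j) = 0"
    using sq_integrable_integrable[OF sq_integrable_covariate] expectation_centred_covariate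
    by (simp add: Bochner_Integration.integral_sum)
  then show ?thesis
    using 0 int sq_integrable_integrable[OF sq_integrable_outcome[OF arm]]
    by (simp add: centred_regressor_def mu_def prob_space)
next
  case (Suc k')
  have "expectation (\<lambda>\<omega>. (Y 0 \<omega> g - mu g - (\<Sum>j<K. (X 0 \<omega> j - muX j) * \<beta> j)) * (X 0 \<omega> j - muX j)) = 0"
    if "j < K" for j
    by (rule lin_proj_residual_orthogonal[OF lin_proj that])
      (use sq_integrable_outcome[OF arm] sq_integrable_covariate in
        \<open>auto intro: sq_integrable_diff sq_integrable_const\<close>)
  then show ?thesis
    using Suc by (simp add: expectation_mult_centred_regressor[OF sq_integrable_residual])
qed

lemma centred_regressor_orthonormal:
  assumes "k < Suc r" "l < Suc r"
  shows "expectation (\<lambda>\<omega>. centred_regressor t muX K k (X 0 \<omega>) * centred_regressor t muX K l (X 0 \<omega>))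
           = (if k = l then 1 else 0)"
proof -
  have centred: "expectation (\<lambda>\<omega>. centred_regressor t muX K (Suc k) (X 0 \<omega>)) = 0" for k
    using expectation_mult_centred_regressor[of "\<lambda>_. 1", OF sq_integrable_const]
      expectation_centred_covariate by simp
  show ?thesis
    using assms orthonormal centred[of "k - 1"] centred[of "l - 1"]
    by (cases k; cases l) (auto simp: L2_orthonormal_def centred_regressor_def[of _ _ _ 0] mult.commute prob_space)
qed

lemma measurable_outcome_covariates[measurable]:
  "(\<lambda>p. centred_regressor t muX K k (snd p)) \<in> borel_measurable (PiM {1..G} (\<lambda>_. borel) \<Otimes>\<^sub>M PiM {..<K} (\<lambda>_. borel))"
  "(\<lambda>p. fst p g - mu g - (\<Sum>j<K. (snd p j - muX j) * \<beta> j))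
     \<in> borel_measurable (PiM {1..G} (\<lambda>_. borel) \<Otimes>\<^sub>M PiM {..<K} (\<lambda>_. borel))"
proof -
  have fst_m: "(\<lambda>p :: (nat \<Rightarrow> real) \<times> (nat \<Rightarrow> real). fst p g) \<in> borel_measurable (PiM {1..G} (\<lambda>_. borel) \<Otimes>\<^sub>M PiM {..<K} (\<lambda>_. borel))"
    using measurable_compose[OF measurable_fst measurable_component_singleton[OF arm]] by simp
  have snd_m: "(\<lambda>p :: (nat \<Rightarrow> real) \<times> (nat \<Rightarrow> real). snd p j) \<in> borel_measurable (PiM {1..G} (\<lambda>_. borel) \<Otimes>\<^sub>M PiM {..<K} (\<lambda>_. borel))"
    if "j < K" for j
    using measurable_compose[OF measurable_snd measurable_component_singleton] that by simp
  show "(\<lambda>p. centred_regressor t muX K k (snd p))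
      \<in> borel_measurable (PiM {1..G} (\<lambda>_. borel) \<Otimes>\<^sub>M PiM {..<K} (\<lambda>_. borel))"
  proof (cases k)
    case (Suc k')
    then show ?thesis
      unfolding centred_regressor_def Suc nat.case
      by (intro borel_measurable_sum borel_measurable_times borel_measurable_diff borel_measurable_const snd_m)
        simp
  qed (simp add: centred_regressor_def)
  show "(\<lambda>p. fst p g - mu g - (\<Sum>j<K. (snd p j - muX j) * \<beta> j))
      \<in> borel_measurable (PiM {1..G} (\<lambda>_. borel) \<Otimes>\<^sub>M PiM {..<K} (\<lambda>_. borel))"
    by (intro borel_measurable_diff borel_measurable_sum borel_measurable_times borel_measurable_const fst_m snd_m)
      simp
qed

lemma expectation_weight_mult:
  assumes "h \<in> borel_measurable (PiM {1..G} (\<lambda>_. borel) \<Otimes>\<^sub>M PiM {..<K} (\<lambda>_. borel))"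
    and "integrable M (\<lambda>\<omega>. h (snd (unit_data G K W Y X 0 \<omega>)))"
  shows "expectation (\<lambda>\<omega>. weight (unit_data G K W Y X 0 \<omega>) * h (snd (unit_data G K W Y X 0 \<omega>)))
           = rho g * expectation (\<lambda>\<omega>. h (snd (unit_data G K W Y X 0 \<omega>)))"
  using expectation_assignment_mult[OF arm assms] by simp

sublocale weighted_regression M "unit_space G K" "unit_data G K W Y X" weight residual regressor "Suc r" "rho g"
proof unfold_locales
  show "AE \<omega> in M. \<bar>weight (unit_data G K W Y X 0 \<omega>)\<bar> \<le> 1"
    using assignment_01[OF arm, of 0] by eventually_elim auto
  show "sq_integrable M (\<lambda>\<omega>. residual (unit_data G K W Y X 0 \<omega>))"
    using sq_integrable_residual by simp
  show "sq_integrable M (\<lambda>\<omega>. regressor k (unit_data G K W Y X 0 \<omega>))" for k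
    using sq_integrable_centred_regressor by simp
  show "expectation (\<lambda>\<omega>. weight (unit_data G K W Y X 0 \<omega>) * regressor k (unit_data G K W Y X 0 \<omega>)
          * regressor l (unit_data G K W Y X 0 \<omega>)) = (if k = l then rho g else 0)"
    if "k < Suc r" "l < Suc r" for k l
    using expectation_weight_mult[OF borel_measurable_times[OF measurable_outcome_covariates(1)[of k]
          measurable_outcome_covariates(1)[of l]]]
      integrable_mult_sq_integrable[OF sq_integrable_centred_regressor sq_integrable_centred_regressor]
      centred_regressor_orthonormal[OF that]
    by (simp add: mult.assoc)
  show "expectation (\<lambda>\<omega>. weight (unit_data G K W Y X 0 \<omega>) * residual (unit_data G K W Y X 0 \<omega>)
          * regressor k (unit_data G K W Y X 0 \<omega>)) = 0" for k
    using expectation_weight_mult[OF borel_measurable_times[OF measurable_outcome_covariates(2)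
          measurable_outcome_covariates(1)[of k]]]
      integrable_mult_sq_integrable[OF sq_integrable_residual sq_integrable_centred_regressor]
      residual_orthogonal[of k] arm
    by (simp add: mult.assoc)
  show "expectation (\<lambda>\<omega>. regressor k (unit_data G K W Y X 0 \<omega>)) = 0" if "0 < k" "k < Suc r" for k
    using centred_regressor_orthonormal[of k 0] that by (simp add: centred_regressor_def[of _ _ _ 0])
qed (use rho_pos in \<open>simp_all add: regressor_def centred_regressor_def\<close>)

lemma AE_regular_sample:
  "AE \<omega> in M. \<forall>i. (\<forall>h\<in>{1..G}. W i \<omega> h = 0 \<or> W i \<omega> h = 1) \<and> (\<Sum>h\<in>{1..G}. W i \<omega> h) = 1
      \<and> (\<forall>j<K. X i \<omega> j - muX j = (\<Sum>k<r. c j k * centred_regressor t muX K (Suc k) (X i \<omega>)))"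
  unfolding AE_all_countable
proof
  fix i
  define P where "P (d :: (nat \<Rightarrow> real) \<times> (nat \<Rightarrow> real) \<times> (nat \<Rightarrow> real)) \<longleftrightarrow> (\<forall>j\<in>{..<K}. snd (snd d) j - muX j
      = (\<Sum>k<r. c j k * centred_regressor t muX K (Suc k) (snd (snd d))))" for d
  have "Measurable.pred (unit_space G K) P"
    unfolding P_def using measurable_unit_space_components(3)
    by (intro pred_intros_finite(3) pred_intros_logic borel_measurable_eq) auto
  moreover have "AE \<omega> in M. P (unit_data G K W Y X 0 \<omega>)"
    unfolding P_def using covariate_rep by (intro AE_finite_allI) simp_all
  ultimately have "AE \<omega> in M. P (unit_data G K W Y X i \<omega>)"
    by (rule AE_D)
  with assignment_valid[of i]
  show "AE \<omega> in M. (\<forall>h\<in>{1..G}. W i \<omega> h = 0 \<or> W i \<omega> h = 1) \<and> (\<Sum>h\<in>{1..G}. W i \<omega> h) = 1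
      \<and> (\<forall>j<K. X i \<omega> j - muX j = (\<Sum>k<r. c j k * centred_regressor t muX K (Suc k) (X i \<omega>)))"
    by eventually_elim (simp add: P_def)
qed

definition coeff_error :: "real \<Rightarrow> (nat \<Rightarrow> real) \<Rightarrow> nat \<Rightarrow> real" where
  "coeff_error a b l = centred_coeff c muX K a b l - centred_coeff c muX K (mu g - (\<Sum>j<K. muX j * \<beta> j)) \<beta> l"

lemma normal_equations_AE:
  assumes ols: "\<And>N \<omega>. \<omega> \<in> space M \<Longrightarrow> is_ols_sub G K W Y X N g \<omega> (ahat N \<omega>) (bhat N \<omega>)"
  shows "AE \<omega> in M. \<forall>N k. k < Suc r \<longrightarrow> (\<Sum>i<N. weight (unit_data G K W Y X i \<omega>)
      * (residual (unit_data G K W Y X i \<omega>) - (\<Sum>l<Suc r. regressor l (unit_data G K W Y X i \<omega>) * coeff_error (ahat N \<omega>) (bhat N \<omega>) l))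
      * regressor k (unit_data G K W Y X i \<omega>)) = 0"
  using AE_regular_sample AE_space
proof eventually_elim
  case (elim \<omega>)
  show ?case
  proof (intro allI impI)
    fix N k :: nat
    show "(\<Sum>i<N. weight (unit_data G K W Y X i \<omega>)
      * (residual (unit_data G K W Y X i \<omega>) - (\<Sum>l<Suc r. regressor l (unit_data G K W Y X i \<omega>) * coeff_error (ahat N \<omega>) (bhat N \<omega>) l))
      * regressor k (unit_data G K W Y X i \<omega>)) = 0"
      unfolding unit_data_arm coeff_error_def
    proof (rule ols_normal_equations_centred)
      show "W i \<omega> g = 0 \<or> W i \<omega> g = 1" for i
        using elim arm by blast
      show "Yobs G W Y i \<omega> = Y i \<omega> g" if "W i \<omega> g = 1" for i
        unfolding Yobs_def using elim arm that by (intro assigned_outcome) auto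
      show "X i \<omega> j - muX j = (\<Sum>k<r. c j k * centred_regressor t muX K (Suc k) (X i \<omega>))" if "j < K" for i j
        using elim that by blast
      show "\<forall>a' b'. (\<Sum>i\<in>{i. i < N \<and> W i \<omega> g = 1}. (Yobs G W Y i \<omega> - ahat N \<omega> - (\<Sum>j<K. X i \<omega> j * bhat N \<omega> j))\<^sup>2)
          \<le> (\<Sum>i\<in>{i. i < N \<and> W i \<omega> g = 1}. (Yobs G W Y i \<omega> - a' - (\<Sum>j<K. X i \<omega> j * b' j))\<^sup>2)"
        using ols[OF elim(2)] unfolding is_ols_sub_def .
    qed
  qed
qed

theorem regression_adjustment_expansion:
  assumes ols: "\<And>N \<omega>. \<omega> \<in> space M \<Longrightarrow> is_ols_sub G K W Y X N g \<omega> (ahat N \<omega>) (bhat N \<omega>)"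
  shows "o_p1 M (\<lambda>N \<omega>. sqrt (real N) * ((ahat N \<omega> + (\<Sum>j<K. ((\<Sum>i<N. X i \<omega> j) / real N) * bhat N \<omega> j)) - mu g)
           - (1 / sqrt (real N)) * (\<Sum>i<N. (\<Sum>j<K. (X i \<omega> j - muX j) * \<beta> j)
               + W i \<omega> g * (Y i \<omega> g - mu g - (\<Sum>j<K. (X i \<omega> j - muX j) * \<beta> j)) / rho g))"
proof (rule o_p1_AE_cong[OF o_p1_weighted_regression_error[OF normal_equations_AE[OF ols]]])
  show "AE \<omega> in M. \<forall>N. sqrt (real N) * ((ahat N \<omega> + (\<Sum>j<K. ((\<Sum>i<N. X i \<omega> j) / real N) * bhat N \<omega> j)) - mu g)
           - (1 / sqrt (real N)) * (\<Sum>i<N. (\<Sum>j<K. (X i \<omega> j - muX j) * \<beta> j)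
               + W i \<omega> g * (Y i \<omega> g - mu g - (\<Sum>j<K. (X i \<omega> j - muX j) * \<beta> j)) / rho g)
         = (\<Sum>k<Suc r. coeff_error (ahat N \<omega>) (bhat N \<omega>) k * ((1 / sqrt (real N))
              * (\<Sum>i<N. regressor k (unit_data G K W Y X i \<omega>))))
           - (1 / sqrt (real N)) * (\<Sum>i<N. weight (unit_data G K W Y X i \<omega>) * residual (unit_data G K W Y X i \<omega>)) / rho g"
    using AE_regular_sample
  proof eventually_elim
    case (elim \<omega>)
    show ?case
      using scaled_estimation_error_centred[where x="\<lambda>i. X i \<omega>" and m=muX and c=c and t=t and K=K and r=r
          and v="\<lambda>i. W i \<omega> g * (Y i \<omega> g - mu g - (\<Sum>j<K. (X i \<omega> j - muX j) * \<beta> j)) / rho g"] elim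
      by (simp add: coeff_error_def sum_divide_distrib mult_ac del: sum.lessThan_Suc)
  qed
qed

end

theorem (in treatment_experiment) regression_adjustment_asymptotic_linearity:
  fixes \<beta> :: "nat \<Rightarrow> real" and ahat :: "nat \<Rightarrow> 'a \<Rightarrow> real" and bhat :: "nat \<Rightarrow> 'a \<Rightarrow> nat \<Rightarrow> real"
  assumes "g \<in> {1..G}" "rho g > 0"
    and "is_lin_proj M K (\<lambda>\<omega> j. X 0 \<omega> j - muX j) (\<lambda>\<omega>. Y 0 \<omega> g - mu g) \<beta>"
    and ols: "\<And>N \<omega>. \<omega> \<in> space M \<Longrightarrow> is_ols_sub G K W Y X N g \<omega> (ahat N \<omega>) (bhat N \<omega>)"
  shows "o_p1 M (\<lambda>N \<omega>. sqrt (real N) * ((ahat N \<omega> + (\<Sum>j<K. ((\<Sum>i<N. X i \<omega> j) / real N) * bhat N \<omega> j)) - mu g)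
           - (1 / sqrt (real N)) * (\<Sum>i<N. (\<Sum>j<K. (X i \<omega> j - muX j) * \<beta> j)
               + W i \<omega> g * (Y i \<omega> g - mu g - (\<Sum>j<K. (X i \<omega> j - muX j) * \<beta> j)) / rho g))"
proof -
  obtain r t c where "L2_orthonormal M r (\<lambda>k \<omega>. centred_regressor t muX K (Suc k) (X 0 \<omega>))"
    and "\<And>j. j < K \<Longrightarrow> AE \<omega> in M. X 0 \<omega> j - muX j
                                = (\<Sum>k<r. c j k * centred_regressor t muX K (Suc k) (X 0 \<omega>))"
    using centred_covariates_orthonormalisation by blast
  then interpret arm: treatment_arm M G K W Y X g \<beta> r t c
    using assms by unfold_locales
  show ?thesis
    using ols by (rule arm.regression_adjustment_expansion)
qed

theorem theorem2:
  fixes M :: "'a measure" and G K :: nat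
    and W Y X :: "nat \<Rightarrow> 'a \<Rightarrow> nat \<Rightarrow> real"
    and beta :: "nat \<Rightarrow> nat \<Rightarrow> real"
    and ahat :: "nat \<Rightarrow> nat \<Rightarrow> 'a \<Rightarrow> real"
    and bhat :: "nat \<Rightarrow> nat \<Rightarrow> 'a \<Rightarrow> nat \<Rightarrow> real"
  defines "rho \<equiv> \<lambda>g. measure M {\<omega>\<in>space M. W 0 \<omega> g = 1}"
    and "mu \<equiv> \<lambda>g. \<integral>\<omega>. Y 0 \<omega> g \<partial>M"
    and "muX \<equiv> \<lambda>j. \<integral>\<omega>. X 0 \<omega> j \<partial>M"
  assumes P: "prob_space M"
    and G2: "G \<ge> 2"
    and meas: "\<And>i. unit_data G K W Y X i \<in> measurable M (unit_space G K)"
    and indep: "prob_space.indep_vars M (\<lambda>_. unit_space G K) (unit_data G K W Y X) UNIV"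
    and ident: "\<And>i. distr M (unit_space G K) (unit_data G K W Y X i)
                     = distr M (unit_space G K) (unit_data G K W Y X 0)"
    and Wvals: "\<And>i. AE \<omega> in M. (\<forall>g\<in>{1..G}. W i \<omega> g = 0 \<or> W i \<omega> g = 1) \<and> (\<Sum>g\<in>{1..G}. W i \<omega> g) = 1"
    and rho_pos: "\<And>g. g \<in> {1..G} \<Longrightarrow> rho g > 0"
    and Windep: "\<And>i. prob_space.indep_set M
                   (sigma_sets (space M) {(\<lambda>\<omega>. restrict (W i \<omega>) {1..G}) -` A \<inter> space M
                      | A. A \<in> sets (PiM {1..G} (\<lambda>_. borel))})
                   (sigma_sets (space M) {(\<lambda>\<omega>. (restrict (Y i \<omega>) {1..G}, restrict (X i \<omega>) {..<K})) -` A \<inter> space M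
                      | A. A \<in> sets (PiM {1..G} (\<lambda>_. borel) \<Otimes>\<^sub>M PiM {..<K} (\<lambda>_. borel))})"
    and Y2: "\<And>g. g \<in> {1..G} \<Longrightarrow> integrable M (\<lambda>\<omega>. (Y 0 \<omega> g)\<^sup>2)"
    and X2: "\<And>j. j < K \<Longrightarrow> integrable M (\<lambda>\<omega>. (X 0 \<omega> j)\<^sup>2)"
    and beta: "\<And>g. g \<in> {1..G} \<Longrightarrow>
                 is_lin_proj M K (\<lambda>\<omega> j. X 0 \<omega> j - muX j) (\<lambda>\<omega>. Y 0 \<omega> g - mu g) (beta g)"
    and ols: "\<And>N g \<omega>. g \<in> {1..G} \<Longrightarrow> \<omega> \<in> space M \<Longrightarrow>
                 is_ols_sub G K W Y X N g \<omega> (ahat N g \<omega>) (bhat N g \<omega>)"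
  shows "\<forall>g\<in>{1..G}. o_p1 M (\<lambda>N \<omega>.
           sqrt (real N) * ((ahat N g \<omega> + (\<Sum>j<K. ((\<Sum>i<N. X i \<omega> j) / real N) * bhat N g \<omega> j)) - mu g)
           - (1 / sqrt (real N)) * (\<Sum>i<N.
                 (\<Sum>j<K. (X i \<omega> j - muX j) * beta g j)
               + W i \<omega> g * (Y i \<omega> g - mu g - (\<Sum>j<K. (X i \<omega> j - muX j) * beta g j)) / rho g))"
proof -
  interpret E: treatment_experiment M G K W Y X
    by (intro treatment_experiment.intro iid_sample.intro iid_sample_axioms.intro
        treatment_experiment_axioms.intro P meas indep ident Wvals Windep Y2 X2)
  have defs: "rho = E.rho" "mu = E.mu" "muX = E.muX"
    unfolding rho_def mu_def muX_def E.rho_def E.mu_def E.muX_def by simp_all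
  show ?thesis
    unfolding defs
  proof (intro ballI, rule E.regression_adjustment_asymptotic_linearity)
  qed (use rho_pos beta ols in \<open>simp_all add: defs\<close>)
qed

end
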